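(* Let $n\ge 3$. The map $\phi_n:|\mathcal K_n|\to\mathbb{R}^n$ is a piecewise linear homeomorphism of $|\mathcal K_n|\cong\partial(W_n^\circ)$ onto the boundary sphere $\partial(Root_n)$. It maps the vertex set of $\mathcal K_n$ bijectively onto the vertex set $\{e_i-e_j: i\neq j\}$ of $Root_n$, and the images of the simplices of $\mathcal K_n$ form a triangulation (without new vertices) of $\partial(Root_n)$, in which every face of $Root_n$ is triangulated by images of simplices of $\mathcal K_n$.
   Context: Identify $[n]$ with the vertices of a regular $n$-gon in $S^1$, labelled counterclockwise, with counterclockwise order $\preceq$; for $a\ne b\in[n]$, $[a,b)=\{z\in S^1:a\preceq z\prec b\}$. A finite collection of such arcs is admissible if any two distinct members $I,J$ are either intersecting and strictly nested, or disjoint with the sink of neither equal to the source of the other. $\mathcal K_n$ is the simplicial complex on the $n(n-1)$ arcs $[i,j)$, $i\neq j$, whose simplices are the nonempty admissible families; it is isomorphic to the boundary complex of the polar dual $W_n^\circ$ of the $(n-1)$-dimensional cyclohedron $W_n$. $Root_n=\mathrm{Conv}\{e_i-e_j:1\le i\ne j\le n\}\subset H_0=\{x\in\mathbb{R}^n:\sum x_i=0\}$, boundary relative to $H_0$. $\phi_n$ is affine on each simplex of $\mathcal K_n$ and sends $[i,j)$ to $e_i-e_j$. *)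

theory Defs
  imports "HOL-Analysis.Analysis"
begin

text \<open>Vertices of the regular n-gon are labelled 0,...,n-1 counterclockwise.
  An arc [a,b) (a \<noteq> b) is encoded by the pair (a,b); as a subset of the circle it is the
  union of the half-open edges [k,k+1) for k = a, a+1, ..., b-1 (mod n), so its
  set-theoretic relations (intersection, nesting) are exactly those of the vertex set below.\<close>

definition arcs :: "nat \<Rightarrow> (nat \<times> nat) set" where
  "arcs n = {(a, b). a < n \<and> b < n \<and> a \<noteq> b}"

definition arc_verts :: "nat \<Rightarrow> nat \<times> nat \<Rightarrow> nat set" where
  "arc_verts n I = {(fst I + k) mod n | k. k < (snd I + n - fst I) mod n}"

text \<open>source of [a,b) is a, sink is b\<close>
definition admissible :: "nat \<Rightarrow> (nat \<times> nat) set \<Rightarrow> bool" where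
  "admissible n F \<longleftrightarrow> finite F \<and> F \<noteq> {} \<and> F \<subseteq> arcs n \<and>
     (\<forall>I\<in>F. \<forall>J\<in>F. I \<noteq> J \<longrightarrow>
        (arc_verts n I \<inter> arc_verts n J \<noteq> {} \<and>
           (arc_verts n I \<subset> arc_verts n J \<or> arc_verts n J \<subset> arc_verts n I))
      \<or> (arc_verts n I \<inter> arc_verts n J = {} \<and> snd I \<noteq> fst J \<and> snd J \<noteq> fst I))"

text \<open>Geometric realization of the simplicial complex K_n inside the space of real functions
  on arcs (product topology): the closed geometric simplex of a face sigma, and |K_n|.\<close>
definition geom_simplex :: "(nat \<times> nat) set \<Rightarrow> ((nat \<times> nat) \<Rightarrow> real) set" where
  "geom_simplex \<sigma> = {t. (\<forall>x. 0 \<le> t x) \<and> (\<forall>x. x \<notin> \<sigma> \<longrightarrow> t x = 0) \<and> sum t \<sigma> = 1}"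

definition realization :: "nat \<Rightarrow> ((nat \<times> nat) \<Rightarrow> real) set" where
  "realization n = (\<Union>\<sigma>\<in>{\<sigma>. admissible n \<sigma>}. geom_simplex \<sigma>)"

definition realization_top :: "nat \<Rightarrow> ((nat \<times> nat) \<Rightarrow> real) topology" where
  "realization_top n = subtopology (powertop_real UNIV) (realization n)"

definition vertex_pt :: "nat \<times> nat \<Rightarrow> ((nat \<times> nat) \<Rightarrow> real)" where
  "vertex_pt x = (\<lambda>y. if y = x then 1 else 0)"

text \<open>R^n is real^'n, with the vertex labels 0..n-1 identified with the coordinates via a
  bijection v; e_i is axis (v i) 1.\<close>
definition ee :: "(nat \<Rightarrow> 'n::finite) \<Rightarrow> nat \<Rightarrow> real^'n" where
  "ee v i = axis (v i) 1"

definition root_vert :: "(nat \<Rightarrow> 'n::finite) \<Rightarrow> nat \<times> nat \<Rightarrow> real^'n" where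
  "root_vert v x = ee v (fst x) - ee v (snd x)"

definition Root :: "nat \<Rightarrow> (nat \<Rightarrow> 'n::finite) \<Rightarrow> (real^'n) set" where
  "Root n v = convex hull {ee v i - ee v j | i j. i < n \<and> j < n \<and> i \<noteq> j}"

definition H0 :: "(real^'n::finite) set" where
  "H0 = {x. (\<Sum>i\<in>UNIV. x $ i) = 0}"

definition Root_boundary :: "nat \<Rightarrow> (nat \<Rightarrow> 'n::finite) \<Rightarrow> (real^'n) set" where
  "Root_boundary n v = (top_of_set H0) frontier_of (Root n v)"

definition phi :: "nat \<Rightarrow> (nat \<Rightarrow> 'n::finite) \<Rightarrow> ((nat \<times> nat) \<Rightarrow> real) \<Rightarrow> real^'n" where
  "phi n v t = (\<Sum>x\<in>arcs n. t x *\<^sub>R root_vert v x)"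

end

theory Submission
  imports Defs
begin

text \<open>
  A point \<open>t\<close> of \<open>|K\<^sub>n|\<close> is a non-negative weighting of an admissible family of arcs. Its
  coverage \<open>c(k)\<close>, the total weight of the arcs containing the vertex \<open>k\<close>, determines
  \<open>\<phi>\<^sub>n(t)\<close>: since the indicator of \<open>[a, b)\<close> steps up at \<open>a\<close> and down at \<open>b\<close>, the \<open>k\<close>-th
  coordinate of \<open>\<phi>\<^sub>n(t)\<close> is \<open>c(k) - c(k - 1)\<close>. In an admissible family no vertex is both a
  source and a sink, so \<open>\<phi>\<^sub>n(t)\<close> has \<open>\<ell>\<^sub>1\<close>-norm twice the total weight, and some vertex is
  uncovered.

  Conversely, every non-negative function on the cycle with a zero is the coverage of exactly
  one admissible weighting: it exists by peeling off the components of the superlevel sets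
  (they are nested or disjoint and never abut), and it is unique because two weightings with
  the same coverage share a shortest arc of one of them, whose weight can be subtracted from
  both. As every point of \<open>H\<^sub>0\<close> is the difference sequence of such a function, \<open>\<phi>\<^sub>n\<close> is a
  bijection from \<open>|K\<^sub>n|\<close> onto the \<open>\<ell>\<^sub>1\<close>-sphere of radius 2 in \<open>H\<^sub>0\<close>. That sphere is the boundary
  of \<open>Root\<^sub>n = {x \<in> H\<^sub>0. \<parallel>x\<parallel>\<^sub>1 \<le> 2}\<close>, and compactness of \<open>|K\<^sub>n|\<close> makes \<open>\<phi>\<^sub>n\<close> a homeomorphism.
  Injectivity also gives affine independence of the vertices of each simplex, hence the
  triangulation, and relative interiors of simplices show that proper faces are unions of them.
\<close>


section \<open>Arithmetic on the cycle and arcs\<close>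
definition cyc_pred :: "nat \<Rightarrow> nat \<Rightarrow> nat" where
  "cyc_pred n k = (k + n - 1) mod n"

definition cyc_dist :: "nat \<Rightarrow> nat \<Rightarrow> nat \<Rightarrow> nat" where
  "cyc_dist n a k = (k + n - a) mod n"

lemma cyc_pred_eq: "k < n \<Longrightarrow> cyc_pred n k = (if k = 0 then n - 1 else k - 1)"
  by (cases k) (simp_all add: cyc_pred_def mod_if)

lemma cyc_pred_less: "k < n \<Longrightarrow> cyc_pred n k < n"
  by (simp add: cyc_pred_eq) linarith

lemma cyc_dist_less: "0 < n \<Longrightarrow> cyc_dist n a k < n"
  by (simp add: cyc_dist_def)

lemma cyc_dist_eq:
  "k < n \<Longrightarrow> a < n \<Longrightarrow> cyc_dist n a k = (if a \<le> k then k - a else k + n - a)"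
  unfolding cyc_dist_def by (auto simp: mod_if)

lemma cyc_dist_self: "a < n \<Longrightarrow> cyc_dist n a a = 0"
  by (simp add: cyc_dist_eq)

lemma add_cyc_dist_mod: "k < n \<Longrightarrow> a < n \<Longrightarrow> (a + cyc_dist n a k) mod n = k"
  by (auto simp: cyc_dist_eq mod_if)

lemma cyc_dist_add_mod: "j < n \<Longrightarrow> a < n \<Longrightarrow> cyc_dist n a ((a + j) mod n) = j"
  by (auto simp: cyc_dist_eq mod_if)

lemma cyc_dist_inject:
  "k < n \<Longrightarrow> k' < n \<Longrightarrow> a < n \<Longrightarrow> cyc_dist n a k = cyc_dist n a k' \<Longrightarrow> k = k'"
  by (metis add_cyc_dist_mod)

lemma cyc_dist_cyc_pred:
  "k < n \<Longrightarrow> a < n \<Longrightarrow> k \<noteq> a \<Longrightarrow> cyc_dist n a (cyc_pred n k) = cyc_dist n a k - 1"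
  by (auto simp: cyc_dist_eq cyc_pred_eq)

lemma cyc_dist_cyc_pred_self: "a < n \<Longrightarrow> cyc_dist n a (cyc_pred n a) = n - 1"
  by (auto simp: cyc_dist_eq cyc_pred_eq)

lemma cyc_pred_add_Suc_mod:
  "Suc j < n \<Longrightarrow> a < n \<Longrightarrow> cyc_pred n ((a + Suc j) mod n) = (a + j) mod n"
  by (auto simp: cyc_pred_eq mod_if)

lemma cyc_pred_invariant_imp_const:
  assumes "\<And>k. k < n \<Longrightarrow> F k = F (cyc_pred n k)" and "k < n"
  shows "F k = F 0"
  using assms(2)
proof (induction k)
  case (Suc j)
  then show ?case using assms(1)[OF Suc.prems] by (simp add: cyc_pred_eq)
qed simp

lemma nat_crossing:
  "P i \<Longrightarrow> \<not> P j \<Longrightarrow> i < j \<Longrightarrow> \<exists>m. i \<le> m \<and> m < j \<and> P m \<and> \<not> P (Suc m)"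
proof (induction j)
  case (Suc j)
  show ?case
  proof (cases "P j")
    case True then show ?thesis using Suc.prems by (intro exI[of _ j]) auto
  next
    case False
    then have "i < j" using Suc.prems by (metis less_SucE)
    then show ?thesis using Suc.IH[OF Suc.prems(1) False] by (meson less_Suc_eq)
  qed
qed simp

lemma finite_obtain_min:
  fixes f :: "'a \<Rightarrow> 'b::linorder"
  assumes "finite S" "S \<noteq> {}"
  obtains x where "x \<in> S" "\<And>y. y \<in> S \<Longrightarrow> f x \<le> f y"
  using arg_min_if_finite(1)[OF assms, where f=f] arg_min_least[OF assms, where f=f] by blast

lemma arcsD: "(a, b) \<in> arcs n \<Longrightarrow> a < n \<and> b < n \<and> a \<noteq> b"
  by (simp add: arcs_def)

lemma finite_arcs: "finite (arcs n)"
  by (rule finite_subset[of _ "{..<n} \<times> {..<n}"]) (auto simp: arcs_def)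

lemma arc_verts_eq:
  "a < n \<Longrightarrow> arc_verts n (a, b) = {k. k < n \<and> cyc_dist n a k < cyc_dist n a b}"
proof (intro set_eqI iffI)
  fix k assume a: "a < n" and "k \<in> arc_verts n (a, b)"
  then obtain j where j: "k = (a + j) mod n" "j < (b + n - a) mod n"
    by (auto simp: arc_verts_def)
  moreover have "0 < n" using a by simp
  ultimately have "j < n" by (meson mod_less_divisor order.strict_trans)
  then show "k \<in> {k. k < n \<and> cyc_dist n a k < cyc_dist n a b}"
    using j a cyc_dist_add_mod[of j n a] by (simp add: cyc_dist_def[of n a b])
next
  fix k assume "a < n" and "k \<in> {k. k < n \<and> cyc_dist n a k < cyc_dist n a b}"
  then show "k \<in> arc_verts n (a, b)"
    using add_cyc_dist_mod[of k n a]
    by (auto simp: arc_verts_def cyc_dist_def intro!: exI[of _ "cyc_dist n a k"])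
qed

lemma mem_arc_verts:
  "(a, b) \<in> arcs n \<Longrightarrow> k \<in> arc_verts n (a, b) \<longleftrightarrow> k < n \<and> cyc_dist n a k < cyc_dist n a b"
  using arcsD arc_verts_eq by blast

lemma arc_verts_subset: "x \<in> arcs n \<Longrightarrow> arc_verts n x \<subseteq> {..<n}"
  by (cases x) (auto simp: mem_arc_verts)

lemma finite_arc_verts: "x \<in> arcs n \<Longrightarrow> finite (arc_verts n x)"
  using arc_verts_subset finite_subset by blast

lemma arc_length_pos: assumes "(a, b) \<in> arcs n" shows "0 < cyc_dist n a b"
proof (rule ccontr)
  assume "\<not> 0 < cyc_dist n a b"
  then have "cyc_dist n a b = cyc_dist n a a" using cyc_dist_self arcsD[OF assms] by simp
  then show False using cyc_dist_inject[of b n a a] arcsD[OF assms] by simp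
qed

lemma source_in_arc: "(a, b) \<in> arcs n \<Longrightarrow> a \<in> arc_verts n (a, b)"
  using mem_arc_verts[of a b n a] arcsD[of a b n] arc_length_pos[of a b n] cyc_dist_self[of a n]
  by simp

lemma sink_notin_arc: "(a, b) \<in> arcs n \<Longrightarrow> b \<notin> arc_verts n (a, b)"
  using mem_arc_verts by blast

lemma pred_source_notin_arc: "(a, b) \<in> arcs n \<Longrightarrow> cyc_pred n a \<notin> arc_verts n (a, b)"
  using mem_arc_verts[of a b n] arcsD[of a b n] cyc_dist_less[of n a b]
    cyc_dist_cyc_pred_self[of a n]
  by (simp, linarith)

lemma pred_sink_in_arc: assumes x: "(a, b) \<in> arcs n" shows "cyc_pred n b \<in> arc_verts n (a, b)"
proof -
  have ab: "b < n" "a < n" "b \<noteq> a" using arcsD[OF x] by auto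
  have "cyc_dist n a (cyc_pred n b) = cyc_dist n a b - 1"
    using cyc_dist_cyc_pred[OF ab] .
  then show ?thesis
    using mem_arc_verts[OF x, of "cyc_pred n b"] arc_length_pos[OF x] cyc_pred_less[OF ab(1)]
    by simp
qed

lemma arc_entry_is_source:
  assumes x: "(a, b) \<in> arcs n"
    and k: "k \<in> arc_verts n (a, b)" "cyc_pred n k \<notin> arc_verts n (a, b)"
  shows "k = a"
proof (rule ccontr)
  assume "k \<noteq> a"
  moreover have kn: "k < n" "cyc_dist n a k < cyc_dist n a b" using k mem_arc_verts[OF x] by auto
  moreover have "a < n" using arcsD[OF x] by simp
  ultimately have "cyc_dist n a (cyc_pred n k) = cyc_dist n a k - 1"
    using cyc_dist_cyc_pred by blast
  then have "cyc_pred n k \<in> arc_verts n (a, b)"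
    using kn mem_arc_verts[OF x, of "cyc_pred n k"] cyc_pred_less[OF kn(1)] by simp
  then show False using k by simp
qed

lemma arc_exit_is_sink:
  assumes x: "(a, b) \<in> arcs n"
    and k: "k < n" "k \<notin> arc_verts n (a, b)" "cyc_pred n k \<in> arc_verts n (a, b)"
  shows "k = b"
proof -
  have ab: "a < n" "b < n" using arcsD[OF x] by auto
  have "k \<noteq> a" using k source_in_arc[OF x] by auto
  then have "cyc_dist n a (cyc_pred n k) = cyc_dist n a k - 1"
    using k(1) ab(1) cyc_dist_cyc_pred by blast
  moreover have "cyc_dist n a (cyc_pred n k) < cyc_dist n a b" "\<not> cyc_dist n a k < cyc_dist n a b"
    using k mem_arc_verts[OF x] by auto
  ultimately have "cyc_dist n a k = cyc_dist n a b" by linarith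
  then show "k = b" using cyc_dist_inject k(1) ab by blast
qed

lemma arc_verts_inject: "inj_on (arc_verts n) (arcs n)"
proof (rule inj_onI)
  fix x y assume x: "x \<in> arcs n" and y: "y \<in> arcs n" and e: "arc_verts n x = arc_verts n y"
  obtain a b c d where xy: "x = (a, b)" "y = (c, d)" by fastforce
  note xx = x[unfolded xy] and yy = y[unfolded xy]
  have "a \<in> arc_verts n (c, d)" "cyc_pred n a \<notin> arc_verts n (c, d)"
    using source_in_arc[OF xx] pred_source_notin_arc[OF xx] e xy by auto
  then have "a = c" using arc_entry_is_source[OF yy] by blast
  have "b \<notin> arc_verts n (c, d)" "cyc_pred n b \<in> arc_verts n (c, d)" "b < n"
    using sink_notin_arc[OF xx] pred_sink_in_arc[OF xx] e xy arcsD[OF xx] by auto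
  then have "b = d" using arc_exit_is_sink[OF yy] by blast
  show "x = y" using xy \<open>a = c\<close> \<open>b = d\<close> by simp
qed

lemma arc_verts_same_source_linear:
  assumes "(a, b) \<in> arcs n" "(a, c) \<in> arcs n"
  shows "arc_verts n (a, b) \<subseteq> arc_verts n (a, c) \<or> arc_verts n (a, c) \<subseteq> arc_verts n (a, b)"
  by (cases "cyc_dist n a b \<le> cyc_dist n a c")
    (auto simp: mem_arc_verts[OF assms(1)] mem_arc_verts[OF assms(2)])

lemma sink_in_arc_of_psubset:
  assumes "(a, b) \<in> arcs n" "(a, c) \<in> arcs n" "arc_verts n (a, b) \<subset> arc_verts n (a, c)"
  shows "b \<in> arc_verts n (a, c)"
proof -
  have "\<not> cyc_dist n a c \<le> cyc_dist n a b"
    using assms(3) by (auto simp: mem_arc_verts[OF assms(1)] mem_arc_verts[OF assms(2)])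
  then show ?thesis using mem_arc_verts[OF assms(2)] arcsD[OF assms(1)] by auto
qed

lemma nested_arcs_not_chained:
  assumes "x \<in> arcs n" "y \<in> arcs n" "arc_verts n x \<subseteq> arc_verts n y"
  shows "snd x \<noteq> fst y" "snd y \<noteq> fst x"
proof -
  obtain a b c d where xy: "x = (a, b)" "y = (c, d)" by fastforce
  show "snd x \<noteq> fst y"
    using pred_sink_in_arc[of a b n] pred_source_notin_arc[of c d n] assms xy by auto
  show "snd y \<noteq> fst x"
    using source_in_arc[of a b n] sink_notin_arc[of c d n] assms xy by auto
qed

text \<open>Walk along \<open>y\<close> from a common vertex with \<open>x\<close> to a vertex outside \<open>x\<close>: the walk
  leaves \<open>x\<close> either forwards through its sink or backwards through its source.\<close>

lemma overlapping_arc_contains_neighbour: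
  assumes x: "x \<in> arcs n" and y: "y \<in> arcs n" and m: "m \<in> arc_verts n x \<inter> arc_verts n y"
    and k: "k \<in> arc_verts n y" "k \<notin> arc_verts n x"
  shows "snd x \<in> arc_verts n y \<or> cyc_pred n (fst x) \<in> arc_verts n y"
proof -
  obtain a b c d where xy: "x = (a, b)" "y = (c, d)" by fastforce
  note xx = x[unfolded xy] and yy = y[unfolded xy]
  have cd: "c < n" using arcsD[OF yy] by auto
  define P where "P j \<longleftrightarrow> (c + j) mod n \<in> arc_verts n (a, b)" for j
  have mn: "m < n" "cyc_dist n c m < cyc_dist n c d" using m mem_arc_verts[OF yy] xy by auto
  have kn: "k < n" "cyc_dist n c k < cyc_dist n c d" using k mem_arc_verts[OF yy] xy by auto
  have Pm: "P (cyc_dist n c m)" using m xy add_cyc_dist_mod[OF mn(1) cd] by (simp add: P_def)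
  have Pk: "\<not> P (cyc_dist n c k)" using k xy add_cyc_dist_mod[OF kn(1) cd] by (simp add: P_def)
  have dn: "cyc_dist n c d < n" using cd by (simp add: cyc_dist_less)
  have in_y: "(c + j) mod n \<in> arc_verts n (c, d)" if "j < cyc_dist n c d" for j
    using that dn cd mem_arc_verts[OF yy] cyc_dist_add_mod[of j n c] by simp
  have "cyc_dist n c m \<noteq> cyc_dist n c k" using Pm Pk by metis
  then consider "cyc_dist n c m < cyc_dist n c k" | "cyc_dist n c k < cyc_dist n c m" by linarith
  then show ?thesis
  proof cases
    case 1
    obtain j where j: "j < cyc_dist n c k" "P j" "\<not> P (Suc j)"
      using nat_crossing[OF Pm Pk 1] by blast
    have "cyc_pred n ((c + Suc j) mod n) = (c + j) mod n"
      using cyc_pred_add_Suc_mod[of j n c] j kn dn cd by simp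
    then have "(c + Suc j) mod n = b" using arc_exit_is_sink[OF xx, of "(c + Suc j) mod n"] j cd
      by (simp add: P_def)
    then show ?thesis using in_y[of "Suc j"] j kn xy by simp
  next
    case 2
    obtain j where j: "j < cyc_dist n c m" "\<not> P j" "P (Suc j)"
      using nat_crossing[of "\<lambda>j. \<not> P j", OF Pk _ 2] Pm by blast
    have pred: "cyc_pred n ((c + Suc j) mod n) = (c + j) mod n"
      using cyc_pred_add_Suc_mod[of j n c] j mn dn cd by simp
    then have "(c + Suc j) mod n = a" using arc_entry_is_source[OF xx, of "(c + Suc j) mod n"] j
      by (simp add: P_def)
    then show ?thesis using pred in_y[of j] j mn xy by simp
  qed
qed

lemma admissibleD:
  "admissible n \<sigma> \<Longrightarrow> I \<in> \<sigma> \<Longrightarrow> J \<in> \<sigma> \<Longrightarrow> I \<noteq> J \<Longrightarrow>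
   (arc_verts n I \<inter> arc_verts n J \<noteq> {} \<and>
      (arc_verts n I \<subset> arc_verts n J \<or> arc_verts n J \<subset> arc_verts n I))
   \<or> (arc_verts n I \<inter> arc_verts n J = {} \<and> snd I \<noteq> fst J \<and> snd J \<noteq> fst I)"
  unfolding admissible_def by blast

lemma admissible_subset:
  assumes "admissible n \<sigma>" "\<tau> \<subseteq> \<sigma>" "\<tau> \<noteq> {}" shows "admissible n \<tau>"
proof -
  have "finite \<tau>" using assms finite_subset unfolding admissible_def by blast
  moreover have "\<tau> \<subseteq> arcs n" using assms by (auto simp: admissible_def)
  ultimately show ?thesis using assms unfolding admissible_def by blast
qed

lemma admissible_singleton: "x \<in> arcs n \<Longrightarrow> admissible n {x}"
  unfolding admissible_def by auto

lemma finite_admissible: "finite {\<sigma>. admissible n \<sigma>}"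
  by (rule finite_subset[of _ "Pow (arcs n)"]) (auto simp: admissible_def finite_arcs)

lemma admissible_sink_ne_source:
  assumes adm: "admissible n \<sigma>" and "x \<in> \<sigma>" "y \<in> \<sigma>"
  shows "snd x \<noteq> fst y"
proof (cases "x = y")
  case True
  then show ?thesis using assms arcsD[of "fst x" "snd x" n] by (auto simp: admissible_def)
next
  case False
  have arcs: "x \<in> arcs n" "y \<in> arcs n" using assms by (auto simp: admissible_def)
  from admissibleD[OF assms False] show ?thesis
  proof
    assume "arc_verts n x \<inter> arc_verts n y \<noteq> {} \<and>
      (arc_verts n x \<subset> arc_verts n y \<or> arc_verts n y \<subset> arc_verts n x)"
    then have "arc_verts n x \<subseteq> arc_verts n y \<or> arc_verts n y \<subseteq> arc_verts n x" by blast
    then show ?thesis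
      using nested_arcs_not_chained(1)[OF arcs] nested_arcs_not_chained(2)[OF arcs(2,1)] by blast
  qed simp
qed

lemma admissible_overlap_shorter_subset:
  assumes adm: "admissible n \<sigma>" and xy: "x \<in> \<sigma>" "y \<in> \<sigma>"
    and overlap: "arc_verts n x \<inter> arc_verts n y \<noteq> {}"
    and shorter: "card (arc_verts n x) \<le> card (arc_verts n y)"
  shows "arc_verts n x \<subseteq> arc_verts n y"
proof (cases "x = y")
  case False
  have "x \<in> arcs n" using adm xy by (auto simp: admissible_def)
  then have "finite (arc_verts n x)" by (rule finite_arc_verts)
  then have "\<not> arc_verts n y \<subset> arc_verts n x"
    using shorter psubset_card_mono[of "arc_verts n x" "arc_verts n y"] by linarith
  then show ?thesis using admissibleD[OF adm xy False] overlap by blast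
qed simp

section \<open>Coverage of admissible weightings\<close>

definition arc_support :: "nat \<Rightarrow> ((nat \<times> nat) \<Rightarrow> real) \<Rightarrow> (nat \<times> nat) set" where
  "arc_support n t = {x \<in> arcs n. 0 < t x}"

definition adm_weight :: "nat \<Rightarrow> ((nat \<times> nat) \<Rightarrow> real) \<Rightarrow> bool" where
  "adm_weight n t \<longleftrightarrow> (\<forall>x. 0 \<le> t x) \<and> (\<forall>x. x \<notin> arcs n \<longrightarrow> t x = 0) \<and>
     (arc_support n t \<noteq> {} \<longrightarrow> admissible n (arc_support n t))"

definition coverage :: "nat \<Rightarrow> ((nat \<times> nat) \<Rightarrow> real) \<Rightarrow> nat \<Rightarrow> real" where
  "coverage n t k = sum t {x \<in> arcs n. k \<in> arc_verts n x}"

lemma adm_weight_nonneg: "adm_weight n t \<Longrightarrow> 0 \<le> t x"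
  unfolding adm_weight_def by blast

lemma adm_weight_admissible:
  "adm_weight n t \<Longrightarrow> arc_support n t \<noteq> {} \<Longrightarrow> admissible n (arc_support n t)"
  unfolding adm_weight_def by blast

lemma adm_weight_zero: assumes "adm_weight n t" "x \<notin> arc_support n t" shows "t x = 0"
proof (cases "x \<in> arcs n")
  case True
  then show ?thesis using assms adm_weight_nonneg[OF assms(1), of x] by (simp add: arc_support_def)
next
  case False
  then show ?thesis using assms(1) unfolding adm_weight_def by blast
qed

lemma finite_arc_support: "finite (arc_support n t)"
  by (rule finite_subset[OF _ finite_arcs]) (auto simp: arc_support_def)

lemma arc_support_subset: "arc_support n t \<subseteq> arcs n"
  by (auto simp: arc_support_def)

lemma adm_weight_sum_mono: assumes "adm_weight n t" "A \<subseteq> B" "finite B" shows "sum t A \<le> sum t B"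
  using sum_mono2[OF assms(3,2)] adm_weight_nonneg[OF assms(1)] by blast

lemma coverage_nonneg: "adm_weight n t \<Longrightarrow> 0 \<le> coverage n t k"
  unfolding coverage_def by (rule sum_nonneg) (rule adm_weight_nonneg)

lemma coverage_arc_support:
  assumes "adm_weight n t" shows "coverage n t k = sum t {x \<in> arc_support n t. k \<in> arc_verts n x}"
  unfolding coverage_def
proof (rule sum.mono_neutral_right)
  show "\<forall>x\<in>{x \<in> arcs n. k \<in> arc_verts n x} - {x \<in> arc_support n t. k \<in> arc_verts n x}. t x = 0"
    using adm_weight_zero[OF assms] by blast
qed (auto simp: finite_arcs arc_support_def)

lemma coverage_beyond: "n \<le> k \<Longrightarrow> coverage n t k = 0"
  unfolding coverage_def using arc_verts_subset by (fastforce intro: sum.neutral)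

lemma coverage_add_point:
  "coverage n (\<lambda>y. t y + (if y = x then c else 0)) k
     = coverage n t k + (if x \<in> arcs n \<and> k \<in> arc_verts n x then c else 0)"
  unfolding coverage_def by (simp add: sum.distrib finite_arcs)

lemma adm_weight_decrease:
  assumes t: "adm_weight n t" and m: "0 \<le> m" "m \<le> t x"
  defines "t' \<equiv> \<lambda>y. t y + (if y = x then - m else 0)"
  shows "adm_weight n t'" and "arc_support n t' \<subseteq> arc_support n t"
    and "m = t x \<Longrightarrow> x \<notin> arc_support n t'"
proof -
  have t'_le: "t' y \<le> t y" for y using m by (simp add: t'_def)
  then show sub: "arc_support n t' \<subseteq> arc_support n t"
    unfolding arc_support_def by (auto intro: order_less_le_trans)
  show "m = t x \<Longrightarrow> x \<notin> arc_support n t'" by (simp add: arc_support_def t'_def)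
  have nonneg: "0 \<le> t' y" for y
    using adm_weight_nonneg[OF t, of y] m by (simp add: t'_def)
  have "t' y = 0" if "y \<notin> arcs n" for y
    using nonneg[of y] t'_le[of y] t that unfolding adm_weight_def by (metis order_antisym)
  moreover have "arc_support n t' \<noteq> {} \<Longrightarrow> admissible n (arc_support n t')"
    using admissible_subset[OF adm_weight_admissible[OF t] sub] sub by blast
  ultimately show "adm_weight n t'" unfolding adm_weight_def using nonneg by blast
qed

text \<open>A second supported arc crossing the source (sink) of a supported arc would have its sink
  (source) there.\<close>

lemma coverage_rises_at_source:
  assumes t: "adm_weight n t" and x: "x \<in> arc_support n t"
  shows "coverage n t (cyc_pred n (fst x)) < coverage n t (fst x)"
proof -
  obtain a b where xab: "x = (a, b)" by fastforce
  have xa: "(a, b) \<in> arcs n" using x xab arc_support_subset by blast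
  have adm: "admissible n (arc_support n t)" using adm_weight_admissible[OF t] x by blast
  let ?S = "\<lambda>k. {y \<in> arc_support n t. k \<in> arc_verts n y}"
  have "?S (cyc_pred n a) \<subseteq> ?S a - {x}"
  proof
    fix y assume y: "y \<in> ?S (cyc_pred n a)"
    then have ys: "y \<in> arc_support n t" and ya: "(fst y, snd y) \<in> arcs n"
      using arc_support_subset by auto
    have "a \<in> arc_verts n y"
    proof (rule ccontr)
      assume "a \<notin> arc_verts n y"
      then have "a = snd y" using arc_exit_is_sink[OF ya, of a] y arcsD[OF xa] by simp
      then show False using admissible_sink_ne_source[OF adm ys x] xab by simp
    qed
    then show "y \<in> ?S a - {x}" using y pred_source_notin_arc[OF xa] xab by auto
  qed
  then have "coverage n t (cyc_pred n a) \<le> sum t (?S a - {x})"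
    unfolding coverage_arc_support[OF t]
    by (rule adm_weight_sum_mono[OF t]) (simp add: finite_arc_support)
  also have "\<dots> = coverage n t a - t x"
    unfolding coverage_arc_support[OF t] using x xab source_in_arc[OF xa]
    by (simp add: sum_diff1 finite_arc_support)
  finally show ?thesis using x xab by (simp add: arc_support_def)
qed

lemma coverage_drops_at_sink:
  assumes t: "adm_weight n t" and x: "x \<in> arc_support n t"
  shows "coverage n t (snd x) < coverage n t (cyc_pred n (snd x))"
proof -
  obtain a b where xab: "x = (a, b)" by fastforce
  have xa: "(a, b) \<in> arcs n" using x xab arc_support_subset by blast
  have adm: "admissible n (arc_support n t)" using adm_weight_admissible[OF t] x by blast
  let ?S = "\<lambda>k. {y \<in> arc_support n t. k \<in> arc_verts n y}"
  have "?S b \<subseteq> ?S (cyc_pred n b) - {x}"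
  proof
    fix y assume y: "y \<in> ?S b"
    then have ys: "y \<in> arc_support n t" and ya: "(fst y, snd y) \<in> arcs n"
      using arc_support_subset by auto
    have "cyc_pred n b \<in> arc_verts n y"
    proof (rule ccontr)
      assume "cyc_pred n b \<notin> arc_verts n y"
      then have "b = fst y" using arc_entry_is_source[OF ya, of b] y by simp
      then show False using admissible_sink_ne_source[OF adm x ys] xab by simp
    qed
    then show "y \<in> ?S (cyc_pred n b) - {x}" using y sink_notin_arc[OF xa] xab by auto
  qed
  then have "coverage n t b \<le> sum t (?S (cyc_pred n b) - {x})"
    unfolding coverage_arc_support[OF t]
    by (rule adm_weight_sum_mono[OF t]) (simp add: finite_arc_support)
  also have "\<dots> = coverage n t (cyc_pred n b) - t x"
    unfolding coverage_arc_support[OF t] using x xab pred_sink_in_arc[OF xa]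
    by (simp add: sum_diff1 finite_arc_support)
  finally show ?thesis using x xab by (simp add: arc_support_def)
qed

text \<open>The supported arcs through a vertex of a shortest supported arc \<open>x\<close> are \<open>x\<close> itself
  and the arcs strictly containing \<open>x\<close>, whatever the vertex.\<close>

lemma coverage_const_on_shortest_arc:
  assumes t: "adm_weight n t" and x: "x \<in> arc_support n t"
    and shortest: "\<And>y. y \<in> arc_support n t \<Longrightarrow> card (arc_verts n x) \<le> card (arc_verts n y)"
    and k: "k \<in> arc_verts n x"
  shows "coverage n t k = coverage n t (fst x)"
proof -
  have adm: "admissible n (arc_support n t)" using adm_weight_admissible[OF t] x by blast
  have through: "{y \<in> arc_support n t. j \<in> arc_verts n y}
      = insert x {y \<in> arc_support n t. arc_verts n x \<subset> arc_verts n y}"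
    if j: "j \<in> arc_verts n x" for j
  proof (intro set_eqI iffI)
    fix y assume "y \<in> {y \<in> arc_support n t. j \<in> arc_verts n y}"
    then have y: "y \<in> arc_support n t" "j \<in> arc_verts n y" by auto
    show "y \<in> insert x {y \<in> arc_support n t. arc_verts n x \<subset> arc_verts n y}"
    proof (cases "y = x")
      case False
      have "arc_verts n x \<subseteq> arc_verts n y"
        using admissible_overlap_shorter_subset[OF adm x y(1) _ shortest[OF y(1)]] j y by blast
      moreover have "arc_verts n x \<noteq> arc_verts n y"
        using inj_onD[OF arc_verts_inject] x y(1) arc_support_subset False by blast
      ultimately show ?thesis using y by blast
    qed simp
  next
    fix y assume "y \<in> insert x {y \<in> arc_support n t. arc_verts n x \<subset> arc_verts n y}"
    then show "y \<in> {y \<in> arc_support n t. j \<in> arc_verts n y}" using j x by blast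
  qed
  have "fst x \<in> arc_verts n x"
    using source_in_arc[of "fst x" "snd x" n] x arc_support_subset by auto
  then show ?thesis unfolding coverage_arc_support[OF t] through[OF k] through[OF \<open>fst x \<in> _\<close>]
    by simp
qed

lemma innermost_arc_at_rise:
  assumes t: "adm_weight n t" and a: "a < n"
    and rise: "coverage n t (cyc_pred n a) < coverage n t a"
  obtains b where "(a, b) \<in> arc_support n t"
    and "\<And>k. k \<in> arc_verts n (a, b) \<Longrightarrow> coverage n t a \<le> coverage n t k"
proof -
  define W where "W = {w \<in> arc_support n t. a \<in> arc_verts n w}"
  have finW: "finite W" using finite_arc_support by (simp add: W_def)
  have cov_a: "coverage n t a = sum t W" using coverage_arc_support[OF t] by (simp add: W_def)
  have ne: "W \<noteq> {}"
  proof
    assume "W = {}"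
    then show False using rise coverage_nonneg[OF t, of "cyc_pred n a"] cov_a by simp
  qed
  obtain w0 where w0: "w0 \<in> W"
    and shortest: "\<And>w. w \<in> W \<Longrightarrow> card (arc_verts n w0) \<le> card (arc_verts n w)"
    using finite_obtain_min[OF finW ne, of "\<lambda>w. card (arc_verts n w)"] by blast
  have w0s: "w0 \<in> arc_support n t" using w0 by (simp add: W_def)
  then have adm: "admissible n (arc_support n t)" using adm_weight_admissible[OF t] by blast
  have w0a: "(fst w0, snd w0) \<in> arcs n" using w0s arc_support_subset by auto
  have inner: "arc_verts n w0 \<subseteq> arc_verts n w" if w: "w \<in> W" for w
    using admissible_overlap_shorter_subset[OF adm w0s _ _ shortest[OF w]] w w0 by (auto simp: W_def)
  have "\<exists>w\<in>W. cyc_pred n a \<notin> arc_verts n w"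
  proof (rule ccontr)
    assume "\<not> ?thesis"
    then have "W \<subseteq> {w \<in> arc_support n t. cyc_pred n a \<in> arc_verts n w}" by (auto simp: W_def)
    then have "sum t W \<le> coverage n t (cyc_pred n a)"
      unfolding coverage_arc_support[OF t]
      by (rule adm_weight_sum_mono[OF t]) (simp add: finite_arc_support)
    then show False using rise cov_a by simp
  qed
  then have "cyc_pred n a \<notin> arc_verts n w0" using inner by blast
  then have "fst w0 = a" using arc_entry_is_source[OF w0a, of a] w0 by (simp add: W_def)
  then obtain b where w0_eq: "w0 = (a, b)" by (cases w0) simp
  show thesis
  proof (rule that)
    show "(a, b) \<in> arc_support n t" using w0s w0_eq by simp
    fix k assume "k \<in> arc_verts n (a, b)"
    then have "W \<subseteq> {w \<in> arc_support n t. k \<in> arc_verts n w}"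
      using inner w0_eq by (auto simp: W_def)
    then have "sum t W \<le> coverage n t k"
      unfolding coverage_arc_support[OF t]
      by (rule adm_weight_sum_mono[OF t]) (simp add: finite_arc_support)
    then show "coverage n t a \<le> coverage n t k" using cov_a by simp
  qed
qed

text \<open>The innermost supported arc starting where the coverage rises stays on the plateau
  (it cannot end inside the plateau, where the coverage does not drop) and covers all of it.\<close>

lemma plateau_arc_in_support:
  assumes t: "adm_weight n t" and x: "(a, b) \<in> arcs n"
    and plateau: "\<And>k. k \<in> arc_verts n (a, b) \<Longrightarrow> coverage n t k = coverage n t a"
    and rise: "coverage n t (cyc_pred n a) < coverage n t a"
    and drop: "coverage n t b < coverage n t a"
  shows "(a, b) \<in> arc_support n t"
proof -
  obtain b0 where w0: "(a, b0) \<in> arc_support n t"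
    and above: "\<And>k. k \<in> arc_verts n (a, b0) \<Longrightarrow> coverage n t a \<le> coverage n t k"
    using innermost_arc_at_rise[OF t _ rise] arcsD[OF x] by blast
  have w0a: "(a, b0) \<in> arcs n" using w0 arc_support_subset by blast
  have "arc_verts n (a, b0) = arc_verts n (a, b)"
  proof (rule ccontr)
    assume "arc_verts n (a, b0) \<noteq> arc_verts n (a, b)"
    with arc_verts_same_source_linear[OF x w0a]
    consider "arc_verts n (a, b) \<subset> arc_verts n (a, b0)" | "arc_verts n (a, b0) \<subset> arc_verts n (a, b)"
      by blast
    then show False
    proof cases
      case 1
      then have "b \<in> arc_verts n (a, b0)" using sink_in_arc_of_psubset[OF x w0a] by simp
      then show False using above drop by fastforce
    next
      case 2
      then have "b0 \<in> arc_verts n (a, b)" "cyc_pred n b0 \<in> arc_verts n (a, b)"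
        using sink_in_arc_of_psubset[OF w0a x] pred_sink_in_arc[OF w0a] by auto
      then have "coverage n t b0 = coverage n t (cyc_pred n b0)" using plateau by simp
      then show False using coverage_drops_at_sink[OF t w0] by simp
    qed
  qed
  then have "(a, b0) = (a, b)" using inj_onD[OF arc_verts_inject] w0a x by blast
  then show ?thesis using w0 by simp
qed

lemma same_coverage_common_arc:
  assumes t: "adm_weight n t" and t': "adm_weight n t'"
    and cov: "\<And>k. coverage n t k = coverage n t' k" and ne: "arc_support n t \<noteq> {}"
  obtains x where "0 < t x" "0 < t' x"
proof -
  obtain x where x: "x \<in> arc_support n t"
    and shortest: "\<And>y. y \<in> arc_support n t \<Longrightarrow> card (arc_verts n x) \<le> card (arc_verts n y)"
    using finite_obtain_min[OF finite_arc_support ne, of "\<lambda>y. card (arc_verts n y)"] by blast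
  obtain a b where xab: "x = (a, b)" by fastforce
  have xa: "(a, b) \<in> arcs n" using x xab arc_support_subset by blast
  have plateau: "coverage n t k = coverage n t a" if "k \<in> arc_verts n (a, b)" for k
    using coverage_const_on_shortest_arc[OF t x shortest] that xab by simp
  have "(a, b) \<in> arc_support n t'"
  proof (rule plateau_arc_in_support[OF t' xa])
    show "coverage n t' k = coverage n t' a" if "k \<in> arc_verts n (a, b)" for k
      using plateau[OF that] cov by simp
    show "coverage n t' (cyc_pred n a) < coverage n t' a"
      using coverage_rises_at_source[OF t x] xab cov by simp
    show "coverage n t' b < coverage n t' a"
      using coverage_drops_at_sink[OF t x] plateau[OF pred_sink_in_arc[OF xa]] xab cov by simp
  qed
  then show thesis using that x xab by (simp add: arc_support_def)
qed

text \<open>Subtract the common weight of a common arc and recurse on the total support size.\<close>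

lemma coverage_inject:
  assumes "adm_weight n t" "adm_weight n t'" "\<And>k. coverage n t k = coverage n t' k"
  shows "t = t'"
proof -
  have "card (arc_support n t) + card (arc_support n t') = N \<Longrightarrow> adm_weight n t \<Longrightarrow> adm_weight n t'
      \<Longrightarrow> (\<And>k. coverage n t k = coverage n t' k) \<Longrightarrow> t = t'" for N t t'
  proof (induction N arbitrary: t t' rule: less_induct)
    case (less N)
    note t = less.prems(2) and t' = less.prems(3) and cov = less.prems(4)
    show ?case
    proof (cases "arc_support n t = {} \<and> arc_support n t' = {}")
      case True
      then show ?thesis using adm_weight_zero[OF t] adm_weight_zero[OF t'] by auto
    next
      case False
      obtain x where x: "0 < t x" "0 < t' x"
      proof (cases "arc_support n t = {}")
        case True
        then have "arc_support n t' \<noteq> {}" using False by blast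
        then show ?thesis using same_coverage_common_arc[OF t' t cov[symmetric]] that by blast
      next
        case False
        then show ?thesis using same_coverage_common_arc[OF t t' cov] that by blast
      qed
      define m where "m = min (t x) (t' x)"
      define s where "s = (\<lambda>y. t y + (if y = x then - m else 0))"
      define s' where "s' = (\<lambda>y. t' y + (if y = x then - m else 0))"
      have m: "0 \<le> m" "m \<le> t x" "m \<le> t' x" using x by (auto simp: m_def)
      note s = adm_weight_decrease[OF t m(1,2), folded s_def]
      note s' = adm_weight_decrease[OF t' m(1,3), folded s'_def]
      have "coverage n s k = coverage n s' k" for k
        unfolding s_def s'_def coverage_add_point using cov[of k] by simp
      moreover have "card (arc_support n s) + card (arc_support n s') < N"
      proof -
        have le: "card (arc_support n s) \<le> card (arc_support n t)"
          "card (arc_support n s') \<le> card (arc_support n t')"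
          using card_mono[OF finite_arc_support] s(2) s'(2) by blast+
        have "x \<in> arc_support n t" "x \<in> arc_support n t'"
          using x adm_weight_zero[OF t, of x] adm_weight_zero[OF t', of x] by auto
        moreover have "m = t x \<or> m = t' x" by (simp add: m_def min_def)
        ultimately have "arc_support n s \<subset> arc_support n t \<or> arc_support n s' \<subset> arc_support n t'"
          using s(2,3) s'(2,3) by blast
        then have "card (arc_support n s) < card (arc_support n t) \<or>
            card (arc_support n s') < card (arc_support n t')"
          using psubset_card_mono[OF finite_arc_support] by blast
        then show ?thesis using le less.prems(1) by linarith
      qed
      ultimately have "s = s'" using less.IH[OF _ refl s(1) s'(1)] by blast
      then show "t = t'" by (simp add: s_def s'_def fun_eq_iff)
    qed
  qed
  then show ?thesis using assms by blast
qed

section \<open>Existence: peeling off superlevel arcs\<close>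

text \<open>\<open>superlevel_arc n F x c\<close>: the arc \<open>x\<close> is a connected component of the superlevel set
  \<open>{k. c \<le> F k}\<close> on the cycle.\<close>

definition superlevel_arc :: "nat \<Rightarrow> (nat \<Rightarrow> real) \<Rightarrow> nat \<times> nat \<Rightarrow> real \<Rightarrow> bool" where
  "superlevel_arc n F x c \<longleftrightarrow> x \<in> arcs n \<and> 0 < c \<and> (\<forall>k\<in>arc_verts n x. c \<le> F k)
     \<and> F (cyc_pred n (fst x)) < c \<and> F (snd x) < c"

lemma superlevel_arcs_nested:
  assumes x: "superlevel_arc n F x c" and y: "superlevel_arc n F y c'" and "c \<le> c'"
    and "arc_verts n x \<inter> arc_verts n y \<noteq> {}"
  shows "arc_verts n y \<subseteq> arc_verts n x"
proof (rule ccontr)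
  assume "\<not> ?thesis"
  then obtain k where k: "k \<in> arc_verts n y" "k \<notin> arc_verts n x" by blast
  obtain m where m: "m \<in> arc_verts n x \<inter> arc_verts n y" using assms(4) by blast
  have "x \<in> arcs n" "y \<in> arcs n" using x y by (auto simp: superlevel_arc_def)
  from overlapping_arc_contains_neighbour[OF this m k] show False
    using x y \<open>c \<le> c'\<close> unfolding superlevel_arc_def by force
qed

lemma superlevel_arcs_not_chained:
  assumes x: "superlevel_arc n F x c" and y: "superlevel_arc n F y c'" and "c \<le> c'"
  shows "snd x \<noteq> fst y" "snd y \<noteq> fst x"
proof -
  have ya: "(fst y, snd y) \<in> arcs n" using y by (simp add: superlevel_arc_def)
  have "c' \<le> F (fst y)" using y source_in_arc[OF ya] by (auto simp: superlevel_arc_def)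
  then show "snd x \<noteq> fst y" using x \<open>c \<le> c'\<close> by (auto simp: superlevel_arc_def)
  have "c' \<le> F (cyc_pred n (snd y))" using y pred_sink_in_arc[OF ya]
    by (auto simp: superlevel_arc_def)
  then show "snd y \<noteq> fst x" using x \<open>c \<le> c'\<close> by (auto simp: superlevel_arc_def)
qed

lemma admissible_superlevel_arcs:
  assumes "finite S" "S \<noteq> {}" and levels: "\<And>x. x \<in> S \<Longrightarrow> \<exists>c. superlevel_arc n F x c"
  shows "admissible n S"
proof -
  have sub: "S \<subseteq> arcs n" using levels by (auto simp: superlevel_arc_def)
  have ordered: "(arc_verts n I \<inter> arc_verts n J \<noteq> {} \<and>
        (arc_verts n I \<subset> arc_verts n J \<or> arc_verts n J \<subset> arc_verts n I))
      \<or> (arc_verts n I \<inter> arc_verts n J = {} \<and> snd I \<noteq> fst J \<and> snd J \<noteq> fst I)"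
    if "superlevel_arc n F I c" "superlevel_arc n F J c'" "c \<le> c'"
      "arc_verts n I \<noteq> arc_verts n J" for I J c c'
    using superlevel_arcs_nested[OF that(1-3)] superlevel_arcs_not_chained[OF that(1-3)] that(4)
    by blast
  show ?thesis unfolding admissible_def
  proof (intro conjI ballI impI)
    fix I J assume IJ: "I \<in> S" "J \<in> S" "I \<noteq> J"
    obtain c c' where "superlevel_arc n F I c" "superlevel_arc n F J c'" using levels IJ by blast
    moreover have "arc_verts n I \<noteq> arc_verts n J" using inj_onD[OF arc_verts_inject] sub IJ by blast
    ultimately show "(arc_verts n I \<inter> arc_verts n J \<noteq> {} \<and>
        (arc_verts n I \<subset> arc_verts n J \<or> arc_verts n J \<subset> arc_verts n I))
      \<or> (arc_verts n I \<inter> arc_verts n J = {} \<and> snd I \<noteq> fst J \<and> snd J \<noteq> fst I)"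
      using ordered[of I c J c'] ordered[of J c' I c] by (cases "c \<le> c'") auto
  qed (use assms sub in auto)
qed

text \<open>Lowering a plateau of \<open>F\<close>, but not below its neighbouring values, creates no new
  superlevel arcs.\<close>

lemma superlevel_arc_lower_plateau:
  assumes P: "(a, b) \<in> arcs n" and F': "\<And>k. F' k = F k - (if k \<in> arc_verts n (a, b) then w else 0)"
    and w: "0 < w" and plateau: "\<And>k. k \<in> arc_verts n (a, b) \<Longrightarrow> F' k = M - w"
    and pa: "F (cyc_pred n a) \<le> M - w" and pb: "F b \<le> M - w"
    and y: "superlevel_arc n F' y c"
  shows "superlevel_arc n F y c"
proof -
  have ya: "(fst y, snd y) \<in> arcs n" and c: "0 < c" and above: "\<And>k. k \<in> arc_verts n y \<Longrightarrow> c \<le> F' k"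
    and l1: "F' (cyc_pred n (fst y)) < c" and l2: "F' (snd y) < c"
    using y unfolding superlevel_arc_def by auto
  have ge: "F' k \<le> F k" for k using F'[of k] w by auto
  have fy: "fst y \<in> arc_verts n y" using source_in_arc[OF ya] by simp
  have py: "cyc_pred n (snd y) \<in> arc_verts n y" using pred_sink_in_arc[OF ya] by simp
  have r1: "F (cyc_pred n (fst y)) < c"
  proof (cases "cyc_pred n (fst y) \<in> arc_verts n (a, b)")
    case False then show ?thesis using F'[of "cyc_pred n (fst y)"] l1 by simp
  next
    case True
    then have low: "M - w < c" using plateau l1 by simp
    then have "fst y \<notin> arc_verts n (a, b)" using plateau above[OF fy] by force
    then have "fst y = b" using arc_exit_is_sink[OF P _ _ True] arcsD[OF ya] by simp
    then show ?thesis using above[OF fy] F'[of b] sink_notin_arc[OF P] pb low by simp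
  qed
  have r2: "F (snd y) < c"
  proof (cases "snd y \<in> arc_verts n (a, b)")
    case False then show ?thesis using F'[of "snd y"] l2 by simp
  next
    case True
    then have low: "M - w < c" using plateau l2 by simp
    then have "cyc_pred n (snd y) \<notin> arc_verts n (a, b)" using plateau above[OF py] by force
    then have "snd y = a" using arc_entry_is_source[OF P True] by simp
    then show ?thesis using above[OF py] F'[of "cyc_pred n a"] pred_source_notin_arc[OF P] pa low
      by simp
  qed
  show ?thesis unfolding superlevel_arc_def using y c above ge r1 r2
    by (auto simp: superlevel_arc_def intro: order.trans)
qed

lemma top_plateau_arc:
  assumes n: "0 < n" and jump: "k1 < n" "F k1 \<noteq> M"
    and M: "M = Max (F ` {..<n})"
  obtains a b where "(a, b) \<in> arcs n" "\<And>k. k \<in> arc_verts n (a, b) \<Longrightarrow> F k = M"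
    "F (cyc_pred n a) < M" "F b < M"
proof -
  have Mge: "\<And>k. k < n \<Longrightarrow> F k \<le> M" unfolding M by (rule Max_ge) auto
  obtain k0 where k0: "k0 < n" "F k0 = M" using Max_in[of "F ` {..<n}"] n unfolding M by fastforce
  define P where "P j \<longleftrightarrow> F ((k1 + j) mod n) = M" for j
  have nP0: "\<not> P 0" using jump by (simp add: P_def)
  have Pk0: "P (cyc_dist n k1 k0)" using add_cyc_dist_mod[OF k0(1) jump(1)] k0 by (simp add: P_def)
  have "0 < cyc_dist n k1 k0" using nP0 Pk0 by (metis gr0I)
  then obtain j where j: "j < cyc_dist n k1 k0" "\<not> P j" "P (Suc j)"
    using nat_crossing[of "\<lambda>j. \<not> P j", OF nP0] Pk0 by blast
  define a where "a = (k1 + Suc j) mod n"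
  have jn: "Suc j < n" using j cyc_dist_less[OF n, of k1 k0] by linarith
  have an: "a < n" using n by (simp add: a_def)
  have Fa: "F a = M" using j by (simp add: P_def a_def)
  have pred_a: "cyc_pred n a = (k1 + j) mod n" using cyc_pred_add_Suc_mod[OF jn jump(1)]
    by (simp add: a_def)
  have Fpa: "F (cyc_pred n a) < M" using j pred_a Mge[OF cyc_pred_less[OF an]] by (simp add: P_def)
  define Q where "Q i \<longleftrightarrow> F ((a + i) mod n) \<noteq> M" for i
  have Qk1: "Q (cyc_dist n a k1)" using add_cyc_dist_mod[OF jump(1) an] jump by (simp add: Q_def)
  define l where "l = (LEAST i. Q i)"
  have Ql: "Q l" using LeastI[of Q, OF Qk1] by (simp add: l_def)
  have ln: "l < n" using Least_le[of Q, OF Qk1] cyc_dist_less[OF n, of a k1] by (simp add: l_def)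
  have below_l: "\<And>i. i < l \<Longrightarrow> \<not> Q i" using not_less_Least by (simp add: l_def)
  have l0: "l \<noteq> 0"
  proof
    assume "l = 0"
    then show False using Ql Fa an by (simp add: Q_def)
  qed
  define b where "b = (a + l) mod n"
  have bn: "b < n" using n by (simp add: b_def)
  have dist_b: "cyc_dist n a b = l" using cyc_dist_add_mod[OF ln an] by (simp add: b_def)
  have ab: "(a, b) \<in> arcs n" using an bn dist_b l0 cyc_dist_self[OF an] by (auto simp: arcs_def)
  show thesis
  proof (rule that[OF ab _ Fpa])
    show "F b < M" using Ql Mge[OF bn] by (simp add: Q_def b_def)
    fix k assume "k \<in> arc_verts n (a, b)"
    then have "k < n" "cyc_dist n a k < l" using mem_arc_verts[OF ab] dist_b by auto
    then show "F k = M" using below_l[of "cyc_dist n a k"] add_cyc_dist_mod[of k n a] an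
      by (simp add: Q_def)
  qed
qed

definition cyc_jumps :: "nat \<Rightarrow> (nat \<Rightarrow> real) \<Rightarrow> nat set" where
  "cyc_jumps n F = {k. k < n \<and> F k \<noteq> F (cyc_pred n k)}"

lemma cyc_jumps_lower_plateau:
  assumes P: "(a, b) \<in> arcs n" and F': "\<And>k. F' k = F k - (if k \<in> arc_verts n (a, b) then w else 0)"
    and jumps: "a \<in> cyc_jumps n F" "b \<in> cyc_jumps n F"
    and flat: "F' a = F' (cyc_pred n a) \<or> F' b = F' (cyc_pred n b)"
  shows "cyc_jumps n F' \<subset> cyc_jumps n F"
proof -
  have "cyc_jumps n F' \<subseteq> cyc_jumps n F"
  proof
    fix k assume k: "k \<in> cyc_jumps n F'"
    then have kn: "k < n" and d: "F' k \<noteq> F' (cyc_pred n k)" by (auto simp: cyc_jumps_def)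
    consider "k \<in> arc_verts n (a, b) \<longleftrightarrow> cyc_pred n k \<in> arc_verts n (a, b)"
      | "k \<in> arc_verts n (a, b)" "cyc_pred n k \<notin> arc_verts n (a, b)"
      | "k \<notin> arc_verts n (a, b)" "cyc_pred n k \<in> arc_verts n (a, b)" by blast
    then show "k \<in> cyc_jumps n F"
    proof cases
      case 1 then show ?thesis using kn d F'[of k] F'[of "cyc_pred n k"]
        by (auto simp: cyc_jumps_def)
    next
      case 2 then show ?thesis using arc_entry_is_source[OF P] jumps by blast
    next
      case 3 then show ?thesis using arc_exit_is_sink[OF P kn] jumps by blast
    qed
  qed
  moreover have "a \<notin> cyc_jumps n F' \<or> b \<notin> cyc_jumps n F'" using flat by (auto simp: cyc_jumps_def)
  ultimately show ?thesis using jumps by blast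
qed

definition lower_on_arc :: "nat \<Rightarrow> nat \<times> nat \<Rightarrow> real \<Rightarrow> (nat \<Rightarrow> real) \<Rightarrow> nat \<Rightarrow> real" where
  "lower_on_arc n x w F k = F k - (if k \<in> arc_verts n x then w else 0)"

text \<open>Lower the top plateau of \<open>F\<close> down to the larger of its two neighbouring values.\<close>

lemma peel_top_plateau:
  assumes n: "0 < n" and nonneg: "\<forall>k<n. 0 \<le> F k" and zero: "\<exists>k<n. F k = 0"
    and jump: "cyc_jumps n F \<noteq> {}"
  obtains x c w where "superlevel_arc n F x c" "0 < w"
    "\<forall>k<n. 0 \<le> lower_on_arc n x w F k" "\<exists>k<n. lower_on_arc n x w F k = 0"
    "card (cyc_jumps n (lower_on_arc n x w F)) < card (cyc_jumps n F)"
    "\<And>y c'. superlevel_arc n (lower_on_arc n x w F) y c' \<Longrightarrow> superlevel_arc n F y c'"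
proof -
  obtain kb where kb: "kb < n" "F kb \<noteq> F (cyc_pred n kb)" using jump by (auto simp: cyc_jumps_def)
  define M where "M = Max (F ` {..<n})"
  have Mge: "\<And>k. k < n \<Longrightarrow> F k \<le> M" unfolding M_def by (rule Max_ge) auto
  obtain k1 where k1: "k1 < n" "F k1 \<noteq> M" using kb cyc_pred_less[OF kb(1)] by metis
  have Mpos: "0 < M" using Mge[OF k1(1)] k1 nonneg by force
  obtain a b where ab: "(a, b) \<in> arcs n" and top: "\<And>k. k \<in> arc_verts n (a, b) \<Longrightarrow> F k = M"
    and Fpa: "F (cyc_pred n a) < M" and Fb: "F b < M"
    using top_plateau_arc[OF n k1 M_def] by blast
  have an: "a < n" "b < n" using arcsD[OF ab] by auto
  define w where "w = M - max (F (cyc_pred n a)) (F b)"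
  note F'_def = lower_on_arc_def[of n "(a, b)" w F]
  have w: "0 < w" using Fpa Fb by (simp add: w_def)
  have top': "\<And>k. k \<in> arc_verts n (a, b) \<Longrightarrow> lower_on_arc n (a, b) w F k = M - w"
    using top by (simp add: lower_on_arc_def)
  have "cyc_jumps n (lower_on_arc n (a, b) w F) \<subset> cyc_jumps n F"
  proof (rule cyc_jumps_lower_plateau[OF ab F'_def])
    show "a \<in> cyc_jumps n F" using an Fpa top[OF source_in_arc[OF ab]] by (simp add: cyc_jumps_def)
    show "b \<in> cyc_jumps n F" using an Fb top[OF pred_sink_in_arc[OF ab]] by (simp add: cyc_jumps_def)
    show "lower_on_arc n (a, b) w F a = lower_on_arc n (a, b) w F (cyc_pred n a)
        \<or> lower_on_arc n (a, b) w F b = lower_on_arc n (a, b) w F (cyc_pred n b)"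
      using top'[OF source_in_arc[OF ab]] top'[OF pred_sink_in_arc[OF ab]]
        pred_source_notin_arc[OF ab] sink_notin_arc[OF ab]
      by (auto simp: lower_on_arc_def w_def max_def)
  qed
  then have "card (cyc_jumps n (lower_on_arc n (a, b) w F)) < card (cyc_jumps n F)"
    by (rule psubset_card_mono[rotated]) (simp add: cyc_jumps_def)
  moreover have "superlevel_arc n F (a, b) M"
    unfolding superlevel_arc_def using ab Mpos top Fpa Fb by simp
  moreover have "\<forall>k<n. 0 \<le> lower_on_arc n (a, b) w F k"
    using nonneg top' cyc_pred_less[OF an(1)] an(2) by (auto simp: lower_on_arc_def w_def le_max_iff_disj)
  moreover obtain kz where kz: "kz < n" "F kz = 0" using zero by blast
  then have "kz \<notin> arc_verts n (a, b)" using top Mpos by fastforce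
  then have "\<exists>k<n. lower_on_arc n (a, b) w F k = 0" using kz by (auto simp: lower_on_arc_def)
  moreover have "superlevel_arc n F y c'" if "superlevel_arc n (lower_on_arc n (a, b) w F) y c'" for y c'
    by (rule superlevel_arc_lower_plateau[OF ab F'_def w top' _ _ that]) (simp_all add: w_def)
  ultimately show thesis using that w by blast
qed

text \<open>Peel off top plateaus and recurse on the number of jumps; every arc peeled off is a
  superlevel arc of the original \<open>F\<close>.\<close>

lemma ex_superlevel_weight:
  assumes n: "0 < n"
  shows "\<forall>k<n. 0 \<le> F k \<Longrightarrow> \<exists>k<n. F k = 0 \<Longrightarrow>
    \<exists>t. (\<forall>x. 0 \<le> t x) \<and> (\<forall>x. x \<notin> arcs n \<longrightarrow> t x = 0)
      \<and> (\<forall>x. 0 < t x \<longrightarrow> (\<exists>c. superlevel_arc n F x c)) \<and> (\<forall>k<n. coverage n t k = F k)"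
proof (induction "card (cyc_jumps n F)" arbitrary: F rule: less_induct)
  case less
  show ?case
  proof (cases "cyc_jumps n F = {}")
    case True
    then have "F k = F 0" if "k < n" for k
      using cyc_pred_invariant_imp_const[of n F, OF _ that] by (auto simp: cyc_jumps_def)
    then have "F k = 0" if "k < n" for k using less.prems(2) that by metis
    then show ?thesis by (intro exI[of _ "\<lambda>_. 0"]) (simp add: coverage_def)
  next
    case False
    obtain x c w where x: "superlevel_arc n F x c" and w: "0 < w"
      and lower: "\<forall>k<n. 0 \<le> lower_on_arc n x w F k" "\<exists>k<n. lower_on_arc n x w F k = 0"
        "card (cyc_jumps n (lower_on_arc n x w F)) < card (cyc_jumps n F)"
      and levels: "\<And>y c'. superlevel_arc n (lower_on_arc n x w F) y c' \<Longrightarrow> superlevel_arc n F y c'"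
      using peel_top_plateau[OF n less.prems False] by blast
    obtain t' where t': "\<forall>x. 0 \<le> t' x" "\<forall>x. x \<notin> arcs n \<longrightarrow> t' x = 0"
        "\<forall>y. 0 < t' y \<longrightarrow> (\<exists>c. superlevel_arc n (lower_on_arc n x w F) y c)"
        "\<forall>k<n. coverage n t' k = lower_on_arc n x w F k"
      using less.hyps[OF lower(3) lower(1,2)] by blast
    define t where "t = (\<lambda>y. t' y + (if y = x then w else 0))"
    have xa: "x \<in> arcs n" using x by (simp add: superlevel_arc_def)
    have "\<exists>c. superlevel_arc n F y c" if "0 < t y" for y
    proof (cases "y = x")
      case False
      then have "0 < t' y" using that by (simp add: t_def)
      then obtain c' where "superlevel_arc n (lower_on_arc n x w F) y c'" using t'(3) by blast
      then show ?thesis using levels by blast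
    qed (use x in blast)
    moreover have "\<forall>k<n. coverage n t k = F k"
      unfolding t_def coverage_add_point using t'(4) xa by (simp add: lower_on_arc_def)
    ultimately show ?thesis using t'(1,2) w xa by (intro exI[of _ t]) (auto simp: t_def)
  qed
qed

lemma ex_adm_weight_coverage:
  assumes "0 < n" "\<forall>k<n. 0 \<le> F k" "\<exists>k<n. F k = 0"
  obtains t where "adm_weight n t" "\<And>k. k < n \<Longrightarrow> coverage n t k = F k"
proof -
  obtain t where t: "\<forall>x. 0 \<le> t x" "\<forall>x. x \<notin> arcs n \<longrightarrow> t x = 0"
      "\<forall>x. 0 < t x \<longrightarrow> (\<exists>c. superlevel_arc n F x c)" "\<forall>k<n. coverage n t k = F k"
    using ex_superlevel_weight[OF assms] by blast
  have "admissible n (arc_support n t)" if "arc_support n t \<noteq> {}"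
  proof (rule admissible_superlevel_arcs[OF finite_arc_support that])
    fix x assume "x \<in> arc_support n t"
    then have "0 < t x" by (simp add: arc_support_def)
    then show "\<exists>c. superlevel_arc n F x c" using t(3) by blast
  qed
  then have "adm_weight n t" unfolding adm_weight_def using t(1,2) by blast
  then show thesis using that t(4) by blast
qed

section \<open>Coordinates of \<open>\<phi>\<^sub>n\<close>\<close>

lemma geom_simplex_adm_weight:
  assumes adm: "admissible n \<sigma>" and t: "t \<in> geom_simplex \<sigma>"
  shows "adm_weight n t" "arc_support n t \<noteq> {}" "arc_support n t \<subseteq> \<sigma>" "(\<Sum>x\<in>arcs n. t x) = 1"
proof -
  have nonneg: "\<And>x. 0 \<le> t x" and out: "\<And>x. x \<notin> \<sigma> \<Longrightarrow> t x = 0" and sum1: "sum t \<sigma> = 1"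
    using t unfolding geom_simplex_def by auto
  have sa: "\<sigma> \<subseteq> arcs n" using adm unfolding admissible_def by auto
  show sub: "arc_support n t \<subseteq> \<sigma>" using out by (force simp: arc_support_def)
  have "sum t \<sigma> = sum t (arcs n)"
    by (rule sum.mono_neutral_left[OF finite_arcs sa]) (use out in auto)
  then show total: "(\<Sum>x\<in>arcs n. t x) = 1" using sum1 by simp
  show ne: "arc_support n t \<noteq> {}"
  proof
    assume empty: "arc_support n t = {}"
    have "t x = 0" if "x \<in> arcs n" for x
    proof -
      have "x \<notin> arc_support n t" using empty by blast
      then have "\<not> 0 < t x" using that by (simp add: arc_support_def)
      then show ?thesis using nonneg[of x] by linarith
    qed
    then show False using total by simp
  qed
  show "adm_weight n t"
    unfolding adm_weight_def using nonneg out sa admissible_subset[OF adm sub] by blast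
qed

lemma adm_weight_geom_simplex:
  assumes t: "adm_weight n t" and total: "(\<Sum>x\<in>arcs n. t x) = 1"
  shows "admissible n (arc_support n t)" "t \<in> geom_simplex (arc_support n t)"
proof -
  have "arc_support n t \<noteq> {}"
  proof
    assume "arc_support n t = {}"
    then have "\<forall>x\<in>arcs n. t x = 0" using adm_weight_zero[OF t] by blast
    then show False using total by simp
  qed
  then show "admissible n (arc_support n t)" using adm_weight_admissible[OF t] by blast
  have "sum t (arc_support n t) = sum t (arcs n)"
    by (rule sum.mono_neutral_left[OF finite_arcs arc_support_subset])
      (use adm_weight_zero[OF t] in blast)
  then show "t \<in> geom_simplex (arc_support n t)"
    unfolding geom_simplex_def using adm_weight_nonneg[OF t] adm_weight_zero[OF t] total by auto
qed

definition l1_norm :: "real^'n::finite \<Rightarrow> real" where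
  "l1_norm x = (\<Sum>i\<in>UNIV. \<bar>x $ i\<bar>)"

lemma root_vert_component:
  assumes "inj_on v {..<n}" "x \<in> arcs n" "k < n"
  shows "root_vert v x $ v k = (if fst x = k then 1 else 0) - (if snd x = k then 1 else 0)"
  using assms arcsD[of "fst x" "snd x" n]
  unfolding root_vert_def ee_def by (auto simp: axis_def inj_on_def)

lemma phi_component:
  assumes "inj_on v {..<n}" "k < n"
  shows "phi n v t $ v k
    = (\<Sum>x\<in>arcs n. t x * ((if fst x = k then 1 else 0) - (if snd x = k then 1 else 0)))"
  unfolding phi_def by (simp add: sum_component root_vert_component[OF assms(1) _ assms(2)])

lemma inj_on_root_vert:
  assumes inj: "inj_on v {..<n}" shows "inj_on (root_vert v) (arcs n)"
proof (rule inj_onI)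
  fix x y assume x: "x \<in> arcs n" and y: "y \<in> arcs n" and e: "root_vert v x = root_vert v y"
  have xn: "fst x < n" "snd x < n" "fst x \<noteq> snd x" using arcsD[of "fst x" "snd x" n] x by auto
  have yn: "fst y \<noteq> snd y" using arcsD[of "fst y" "snd y" n] y by auto
  have "root_vert v x $ v (fst x) = root_vert v y $ v (fst x)" using e by simp
  then have fst_eq: "fst y = fst x"
    using root_vert_component[OF inj x xn(1)] root_vert_component[OF inj y xn(1)] xn yn
    by (auto split: if_splits)
  have "root_vert v x $ v (snd x) = root_vert v y $ v (snd x)" using e by simp
  then have "snd y = snd x"
    using root_vert_component[OF inj x xn(2)] root_vert_component[OF inj y xn(2)] xn yn fst_eq
    by (auto split: if_splits)
  then show "x = y" using fst_eq by (simp add: prod_eq_iff)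
qed

lemma arc_indicator_diff:
  assumes x: "x \<in> arcs n" and k: "k < n"
  shows "(if k \<in> arc_verts n x then 1 else 0)
           - (if cyc_pred n k \<in> arc_verts n x then 1 else (0::real))
         = (if fst x = k then 1 else 0) - (if snd x = k then 1 else 0)"
proof -
  obtain a b where xab: "x = (a, b)" by fastforce
  note xa = x[unfolded xab]
  have ab: "a \<noteq> b" using arcsD[OF xa] by simp
  consider "k = a" | "k = b" | "k \<noteq> a" "k \<noteq> b" by blast
  then show ?thesis
  proof cases
    case 1 then show ?thesis using source_in_arc[OF xa] pred_source_notin_arc[OF xa] ab xab by auto
  next
    case 2 then show ?thesis using sink_notin_arc[OF xa] pred_sink_in_arc[OF xa] ab xab by auto
  next
    case 3
    have "k \<in> arc_verts n (a, b) \<longleftrightarrow> cyc_pred n k \<in> arc_verts n (a, b)"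
      using arc_entry_is_source[OF xa, of k] arc_exit_is_sink[OF xa k] 3 by blast
    then show ?thesis using 3 xab by simp
  qed
qed

lemma phi_component_coverage:
  assumes inj: "inj_on v {..<n}" and k: "k < n"
  shows "phi n v t $ v k = coverage n t k - coverage n t (cyc_pred n k)"
proof -
  have cov: "coverage n t j = (\<Sum>x\<in>arcs n. t x * (if j \<in> arc_verts n x then 1 else 0))" for j
    unfolding coverage_def using finite_arcs
    by (simp add: sum.inter_filter[symmetric] if_distrib cong: if_cong)
  have "coverage n t k - coverage n t (cyc_pred n k) = (\<Sum>x\<in>arcs n. t x *
      ((if k \<in> arc_verts n x then 1 else 0) - (if cyc_pred n k \<in> arc_verts n x then 1 else 0)))"
    unfolding cov by (simp add: sum_subtractf right_diff_distrib)
  also have "\<dots> = phi n v t $ v k"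
    unfolding phi_component[OF inj k] by (rule sum.cong[OF refl]) (simp add: arc_indicator_diff k)
  finally show ?thesis ..
qed

lemma sum_arcs_endpoint_indicator:
  fixes t :: "nat \<times> nat \<Rightarrow> real"
  assumes "\<And>x. x \<in> arcs n \<Longrightarrow> f x < n"
  shows "(\<Sum>k<n. \<Sum>x\<in>arcs n. t x * (if f x = k then 1 else 0)) = (\<Sum>x\<in>arcs n. t x)"
proof -
  have "(\<Sum>k<n. t x * (if f x = k then 1 else 0)) = t x" if "x \<in> arcs n" for x
    using assms[OF that] by (simp add: if_distrib sum.delta' cong: if_cong)
  then show ?thesis by (subst sum.swap) simp
qed

lemma sum_arcs_fst_indicator:
  fixes t :: "nat \<times> nat \<Rightarrow> real"
  shows "(\<Sum>k<n. \<Sum>x\<in>arcs n. t x * (if fst x = k then 1 else 0)) = (\<Sum>x\<in>arcs n. t x)"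
  by (rule sum_arcs_endpoint_indicator) (auto dest: arcsD)

lemma sum_arcs_snd_indicator:
  fixes t :: "nat \<times> nat \<Rightarrow> real"
  shows "(\<Sum>k<n. \<Sum>x\<in>arcs n. t x * (if snd x = k then 1 else 0)) = (\<Sum>x\<in>arcs n. t x)"
  by (rule sum_arcs_endpoint_indicator) (auto dest: arcsD)

lemma sum_pos_imp_support:
  assumes t: "adm_weight n t" and pos: "0 < (\<Sum>x\<in>arcs n. t x * (if P x then 1 else 0))"
  obtains x where "x \<in> arc_support n t" "P x"
proof -
  have "\<exists>x\<in>arcs n. t x * (if P x then 1 else 0) \<noteq> 0"
    using pos sum.neutral[of "arcs n" "\<lambda>x. t x * (if P x then 1 else 0)"] by force
  then obtain x where x: "x \<in> arcs n" "P x" "t x \<noteq> 0" by (auto split: if_splits)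
  then have "0 < t x" using adm_weight_nonneg[OF t, of x] by (simp add: order_less_le)
  then show thesis using that x by (simp add: arc_support_def)
qed

text \<open>Since no vertex is both a source and a sink in an admissible family, the positive and the
  negative parts of each coordinate of \<open>phi\<close> do not cancel.\<close>

lemma l1_norm_phi_coords:
  assumes t: "adm_weight n t" and inj: "inj_on v {..<n}"
  shows "(\<Sum>k<n. \<bar>phi n v t $ v k\<bar>) = 2 * (\<Sum>x\<in>arcs n. t x)"
proof -
  define src where "src k = (\<Sum>x\<in>arcs n. t x * (if fst x = k then 1 else 0))" for k
  define snk where "snk k = (\<Sum>x\<in>arcs n. t x * (if snd x = k then 1 else 0))" for k
  have nonneg: "0 \<le> src k" "0 \<le> snk k" for k
    unfolding src_def snk_def by (auto intro!: sum_nonneg simp: adm_weight_nonneg[OF t])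
  have one_zero: "src k = 0 \<or> snk k = 0" for k
  proof (rule ccontr)
    assume "\<not> ?thesis"
    then have pos: "0 < src k" "0 < snk k" using nonneg[of k] by auto
    obtain x where x: "x \<in> arc_support n t" "fst x = k"
      using pos(1) unfolding src_def by (rule sum_pos_imp_support[OF t])
    obtain y where y: "y \<in> arc_support n t" "snd y = k"
      using pos(2) unfolding snk_def by (rule sum_pos_imp_support[OF t])
    have "admissible n (arc_support n t)" using adm_weight_admissible[OF t] x by blast
    then show False using admissible_sink_ne_source[OF _ y(1) x(1)] x y by simp
  qed
  have "\<bar>phi n v t $ v k\<bar> = src k + snk k" if "k < n" for k
    using phi_component[OF inj that] one_zero[of k] nonneg[of k]
    by (auto simp: src_def snk_def sum_subtractf right_diff_distrib)
  then have "(\<Sum>k<n. \<bar>phi n v t $ v k\<bar>) = (\<Sum>k<n. src k + snk k)" by simp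
  also have "\<dots> = 2 * (\<Sum>x\<in>arcs n. t x)"
    using sum_arcs_fst_indicator[of t n] sum_arcs_snd_indicator[of t n]
    by (simp add: sum.distrib src_def snk_def)
  finally show ?thesis .
qed

text \<open>The longest supported arc: no supported arc contains its sink.\<close>

lemma adm_weight_uncovered_vertex:
  assumes t: "adm_weight n t" and ne: "arc_support n t \<noteq> {}"
  obtains k where "k < n" "coverage n t k = 0"
proof -
  have adm: "admissible n (arc_support n t)" using adm_weight_admissible[OF t ne] .
  obtain x where x: "x \<in> arc_support n t"
    and longest: "\<And>y. y \<in> arc_support n t \<Longrightarrow>
      - int (card (arc_verts n x)) \<le> - int (card (arc_verts n y))"
    using finite_obtain_min[OF finite_arc_support ne, of "\<lambda>y. - int (card (arc_verts n y))"]
    by blast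
  have xa: "(fst x, snd x) \<in> arcs n" using x arc_support_subset by auto
  have none: "snd x \<notin> arc_verts n y" if y: "y \<in> arc_support n t" for y
  proof
    assume b: "snd x \<in> arc_verts n y"
    have ya: "(fst y, snd y) \<in> arcs n" using y arc_support_subset by auto
    have bx: "snd x \<notin> arc_verts n x" using sink_notin_arc[OF xa] by simp
    then have "x \<noteq> y" using b by blast
    from admissibleD[OF adm x y this] show False
    proof
      assume "arc_verts n x \<inter> arc_verts n y \<noteq> {} \<and>
        (arc_verts n x \<subset> arc_verts n y \<or> arc_verts n y \<subset> arc_verts n x)"
      moreover have "\<not> arc_verts n x \<subset> arc_verts n y"
        using longest[OF y] psubset_card_mono[OF finite_arc_verts, of y n "arc_verts n x"] ya
        by auto
      ultimately show False using b bx by blast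
    next
      assume h: "arc_verts n x \<inter> arc_verts n y = {} \<and> snd x \<noteq> fst y \<and> snd y \<noteq> fst x"
      then have "cyc_pred n (snd x) \<notin> arc_verts n y" using pred_sink_in_arc[OF xa] by auto
      then have "snd x = fst y" using arc_entry_is_source[OF ya, of "snd x"] b by simp
      then show False using h by simp
    qed
  qed
  have "{y \<in> arc_support n t. snd x \<in> arc_verts n y} = {}" using none by blast
  then have "coverage n t (snd x) = 0" unfolding coverage_arc_support[OF t]
    by (simp only: sum.empty)
  moreover have "snd x < n" using arcsD[OF xa] by simp
  ultimately show thesis using that by blast
qed

text \<open>Two points of \<open>|K_n|\<close> with the same image have coverages differing by a constant along
  the cycle; both coverages vanish somewhere, so the constant is zero.\<close>

lemma phi_inject:
  assumes t: "adm_weight n t" and t': "adm_weight n t'"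
    and ne: "arc_support n t \<noteq> {}" "arc_support n t' \<noteq> {}"
    and inj: "inj_on v {..<n}" and eq: "phi n v t = phi n v t'"
  shows "t = t'"
proof -
  define D where "D k = coverage n t k - coverage n t' k" for k
  have "D k = D (cyc_pred n k)" if "k < n" for k
    using phi_component_coverage[OF inj that, of t] phi_component_coverage[OF inj that, of t'] eq
    by (simp add: D_def)
  then have const: "D k = D 0" if "k < n" for k using cyc_pred_invariant_imp_const that by blast
  obtain k1 where k1: "k1 < n" "coverage n t k1 = 0" using adm_weight_uncovered_vertex[OF t ne(1)] .
  obtain k2 where k2: "k2 < n" "coverage n t' k2 = 0"
    using adm_weight_uncovered_vertex[OF t' ne(2)] .
  have "D k1 \<le> 0" "0 \<le> D k2" using k1 k2 coverage_nonneg[OF t] coverage_nonneg[OF t']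
    by (auto simp: D_def)
  then have "D 0 = 0" using const[OF k1(1)] const[OF k2(1)] by linarith
  then have "coverage n t k = coverage n t' k" for k
    using const[of k] coverage_beyond[of n k] by (cases "k < n") (auto simp: D_def)
  then show ?thesis using coverage_inject[OF t t'] by blast
qed

section \<open>The root polytope\<close>

lemma l1_norm_scaleR: "l1_norm (c *\<^sub>R x) = \<bar>c\<bar> * l1_norm x"
  unfolding l1_norm_def by (simp add: abs_mult sum_distrib_left)

lemma l1_norm_nonneg: "0 \<le> l1_norm x"
  unfolding l1_norm_def by (simp add: sum_nonneg)

lemma continuous_on_l1_norm: "continuous_on UNIV l1_norm"
  unfolding l1_norm_def[abs_def] by (intro continuous_intros)

lemma continuous_map_scaleR_const:
  "continuous_map X euclideanreal f \<Longrightarrow>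
    continuous_map X euclidean (\<lambda>x. f x *\<^sub>R (c::'a::real_normed_vector))"
  by (simp add: continuous_map_atin tendsto_scaleR)

lemma subspace_H0: "subspace H0"
  unfolding subspace_def H0_def by (simp add: sum.distrib sum_distrib_left[symmetric])

lemma convex_l1_ball: "convex {x. l1_norm x \<le> r}"
proof (rule convexI)
  fix x y :: "real^'n" and a b :: real
  assume x: "x \<in> {x. l1_norm x \<le> r}" and y: "y \<in> {x. l1_norm x \<le> r}"
    and ab: "0 \<le> a" "0 \<le> b" "a + b = 1"
  have "l1_norm (a *\<^sub>R x + b *\<^sub>R y) \<le> (\<Sum>i\<in>UNIV. a * \<bar>x $ i\<bar> + b * \<bar>y $ i\<bar>)"
    unfolding l1_norm_def using ab
    by (intro sum_mono) (simp add: abs_mult abs_triangle_ineq[THEN order_trans])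
  also have "\<dots> = a * l1_norm x + b * l1_norm y"
    by (simp add: l1_norm_def sum.distrib sum_distrib_left)
  also have "\<dots> \<le> a * r + b * r" using x y ab by (intro add_mono mult_left_mono) auto
  finally show "a *\<^sub>R x + b *\<^sub>R y \<in> {x. l1_norm x \<le> r}" using ab
    by (simp add: distrib_right[symmetric])
qed

lemma convex_difference_le: "convex {y :: real^'n. y $ i - y $ j \<le> c}"
proof -
  have "{y :: real^'n. y $ i - y $ j \<le> c} = {y. (axis i 1 - axis j 1) \<bullet> y \<le> c}"
    by (simp add: inner_diff_left inner_axis')
  then show ?thesis by (simp add: convex_halfspace_le)
qed

lemma root_vertices_eq: "{ee v i - ee v j | i j. i < n \<and> j < n \<and> i \<noteq> j} = root_vert v ` arcs n"
  unfolding root_vert_def arcs_def by force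

lemma Root_eq: "Root n v = convex hull (root_vert v ` arcs n)"
  unfolding Root_def root_vertices_eq ..

lemma convex_Root: "convex (Root n v)"
  by (simp add: Root_eq)

lemma phi_eq_sum_over:
  assumes "\<sigma> \<subseteq> arcs n" "\<And>x. x \<notin> \<sigma> \<Longrightarrow> t x = 0"
  shows "phi n v t = (\<Sum>x\<in>\<sigma>. t x *\<^sub>R root_vert v x)"
  unfolding phi_def by (rule sum.mono_neutral_right[OF finite_arcs assms(1)]) (use assms(2) in auto)

lemma phi_vertex_pt: "x \<in> arcs n \<Longrightarrow> phi n v (vertex_pt x) = root_vert v x"
  using phi_eq_sum_over[of "{x}" n "vertex_pt x"] by (simp add: vertex_pt_def)

lemma vertex_pt_in_geom_simplex: "vertex_pt x \<in> geom_simplex {x}"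
  unfolding geom_simplex_def vertex_pt_def by auto

lemma ex_weight_on_image:
  assumes "inj_on f S" obtains u where "\<And>x. x \<in> S \<Longrightarrow> u (f x) = t x"
  using that[of "\<lambda>q. t (inv_into S f q)"] inv_into_f_f[OF assms] by simp

text \<open>The potential is the sequence of partial sums of \<open>g\<close>, shifted to have minimum \<open>0\<close>.\<close>

lemma ex_cyc_potential:
  fixes g :: "nat \<Rightarrow> real"
  assumes n: "0 < n" and sum0: "(\<Sum>k<n. g k) = 0"
  obtains F where "\<forall>k<n. 0 \<le> F k" "\<exists>k<n. F k = 0" "\<And>k. k < n \<Longrightarrow> F k - F (cyc_pred n k) = g k"
proof -
  define S where "S k = (\<Sum>j\<in>{..k}. g j)" for k
  define F where "F k = S k - Min (S ` {..<n})" for k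
  have "\<forall>k<n. 0 \<le> F k" unfolding F_def by (auto intro: Min_le)
  moreover obtain kz where "kz < n" "S kz = Min (S ` {..<n})"
    using Min_in[of "S ` {..<n}"] n by fastforce
  then have "\<exists>k<n. F k = 0" by (auto simp: F_def)
  moreover have "F k - F (cyc_pred n k) = g k" if k: "k < n" for k
  proof (cases k)
    case 0
    have "{..n - 1} = {..<n}" using n by auto
    then show ?thesis using 0 n sum0 by (simp add: F_def S_def cyc_pred_eq)
  next
    case (Suc j)
    then show ?thesis using k by (simp add: F_def S_def cyc_pred_eq)
  qed
  ultimately show thesis using that by blast
qed

locale root_polytope =
  fixes v :: "nat \<Rightarrow> 'n::finite" and n :: nat
  assumes card_n: "n = CARD('n)" and n_ge_3: "3 \<le> n" and bij_v: "bij_betw v {..<n} UNIV"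
begin

lemma inj_v: "inj_on v {..<n}"
  using bij_v bij_betw_def by blast

lemma sum_UNIV_labels: "(\<Sum>i\<in>UNIV. f i) = (\<Sum>k<n. f (v k))"
  using sum.reindex_bij_betw[OF bij_v, of f] by simp

lemma vec_eq_labelsI: "(\<And>k. k < n \<Longrightarrow> x $ v k = y $ v k) \<Longrightarrow> x = y"
  by (metis bij_betw_imp_surj_on bij_v imageE lessThan_iff UNIV_I vec_eq_iff)

lemma l1_norm_labels: "l1_norm x = (\<Sum>k<n. \<bar>x $ v k\<bar>)"
  unfolding l1_norm_def by (rule sum_UNIV_labels)

lemma mem_H0_labels: "x \<in> H0 \<longleftrightarrow> (\<Sum>k<n. x $ v k) = 0"
  unfolding H0_def using sum_UNIV_labels[of "\<lambda>i. x $ i"] by simp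

lemma phi_in_H0: "phi n v t \<in> H0"
proof -
  have "(\<Sum>k<n. phi n v t $ v k) = (\<Sum>k<n. \<Sum>x\<in>arcs n. t x * (if fst x = k then 1 else 0))
      - (\<Sum>k<n. \<Sum>x\<in>arcs n. t x * (if snd x = k then 1 else 0))"
    by (simp add: phi_component[OF inj_v] right_diff_distrib sum_subtractf)
  then show ?thesis
    unfolding mem_H0_labels sum_arcs_fst_indicator sum_arcs_snd_indicator by simp
qed

lemma l1_norm_phi: "admissible n \<sigma> \<Longrightarrow> t \<in> geom_simplex \<sigma> \<Longrightarrow> l1_norm (phi n v t) = 2"
  unfolding l1_norm_labels
  using l1_norm_phi_coords[OF geom_simplex_adm_weight(1) inj_v] geom_simplex_adm_weight(4) by simp

lemma phi_onto_l1_sphere: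
  assumes y: "y \<in> H0" and norm_y: "l1_norm y = 2"
  obtains \<sigma> t where "admissible n \<sigma>" "t \<in> geom_simplex \<sigma>" "phi n v t = y"
proof -
  have n: "0 < n" using n_ge_3 by simp
  obtain F where F: "\<forall>k<n. 0 \<le> F k" "\<exists>k<n. F k = 0"
    and F_diff: "\<And>k. k < n \<Longrightarrow> F k - F (cyc_pred n k) = y $ v k"
    using ex_cyc_potential[OF n, of "\<lambda>k. y $ v k"] y mem_H0_labels by blast
  obtain t where t: "adm_weight n t" and cov: "\<And>k. k < n \<Longrightarrow> coverage n t k = F k"
    using ex_adm_weight_coverage[OF n F] by blast
  have phi_t: "phi n v t = y"
  proof (rule vec_eq_labelsI)
    fix k assume k: "k < n"
    show "phi n v t $ v k = y $ v k"
      using phi_component_coverage[OF inj_v k] cov[OF k] cov[OF cyc_pred_less[OF k]] F_diff[OF k]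
      by simp
  qed
  then have "(\<Sum>x\<in>arcs n. t x) = 1"
    using l1_norm_phi_coords[OF t inj_v] norm_y l1_norm_labels by simp
  then show thesis using that adm_weight_geom_simplex[OF t] phi_t by blast
qed

lemma phi_geom_simplex:
  assumes adm: "admissible n \<sigma>"
  shows "phi n v ` geom_simplex \<sigma> = convex hull (root_vert v ` \<sigma>)"
proof -
  have sa: "\<sigma> \<subseteq> arcs n" and fs: "finite \<sigma>" using adm unfolding admissible_def by auto
  have inj: "inj_on (root_vert v) \<sigma>" using inj_on_root_vert[OF inj_v] sa inj_on_subset by blast
  have hull: "convex hull (root_vert v ` \<sigma>) = {y. \<exists>u. (\<forall>x\<in>root_vert v ` \<sigma>. 0 \<le> u x)
      \<and> sum u (root_vert v ` \<sigma>) = 1 \<and> (\<Sum>x\<in>root_vert v ` \<sigma>. u x *\<^sub>R x) = y}"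
    using convex_hull_finite[of "root_vert v ` \<sigma>"] fs by simp
  show ?thesis
  proof
    show "phi n v ` geom_simplex \<sigma> \<subseteq> convex hull (root_vert v ` \<sigma>)"
    proof
      fix p assume "p \<in> phi n v ` geom_simplex \<sigma>"
      then obtain t where t: "t \<in> geom_simplex \<sigma>" "p = phi n v t" by blast
      have nonneg: "\<And>x. 0 \<le> t x" and out: "\<And>x. x \<notin> \<sigma> \<Longrightarrow> t x = 0" and sum1: "sum t \<sigma> = 1"
        using t unfolding geom_simplex_def by auto
      obtain u where u: "\<And>x. x \<in> \<sigma> \<Longrightarrow> u (root_vert v x) = t x"
        using ex_weight_on_image[OF inj, where t=t] by blast
      have phi_t: "phi n v t = (\<Sum>x\<in>\<sigma>. t x *\<^sub>R root_vert v x)"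
        using phi_eq_sum_over[OF sa, where t=t and v=v] out by blast
      have "sum u (root_vert v ` \<sigma>) = 1" using sum.reindex[OF inj, of u] u sum1 by simp
      moreover have "(\<Sum>q\<in>root_vert v ` \<sigma>. u q *\<^sub>R q) = p"
        using sum.reindex[OF inj, of "\<lambda>q. u q *\<^sub>R q"] u t(2) phi_t by simp
      moreover have "\<forall>q\<in>root_vert v ` \<sigma>. 0 \<le> u q" using u nonneg by auto
      ultimately show "p \<in> convex hull (root_vert v ` \<sigma>)" unfolding hull by blast
    qed
  next
    show "convex hull (root_vert v ` \<sigma>) \<subseteq> phi n v ` geom_simplex \<sigma>"
    proof
      fix p assume "p \<in> convex hull (root_vert v ` \<sigma>)"
      then obtain u where u: "\<forall>q\<in>root_vert v ` \<sigma>. 0 \<le> u q" "sum u (root_vert v ` \<sigma>) = 1"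
        "(\<Sum>q\<in>root_vert v ` \<sigma>. u q *\<^sub>R q) = p" unfolding hull by blast
      define t where "t x = (if x \<in> \<sigma> then u (root_vert v x) else 0)" for x
      have "sum t \<sigma> = sum u (root_vert v ` \<sigma>)"
        using sum.reindex[OF inj, of u] by (simp add: t_def)
      then have "t \<in> geom_simplex \<sigma>" using u(1,2) unfolding geom_simplex_def by (auto simp: t_def)
      moreover have "phi n v t = p"
        using phi_eq_sum_over[OF sa, where t=t and v=v] u(3) sum.reindex[OF inj, of "\<lambda>q. u q *\<^sub>R q"]
        by (simp add: t_def)
      ultimately show "p \<in> phi n v ` geom_simplex \<sigma>" by blast
    qed
  qed
qed

lemma geom_simplex_phi_inject:
  assumes "admissible n \<sigma>" "t \<in> geom_simplex \<sigma>" "admissible n \<sigma>'" "t' \<in> geom_simplex \<sigma>'"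
    and "phi n v t = phi n v t'"
  shows "t = t'"
proof -
  note w = geom_simplex_adm_weight[OF assms(1,2)] and w' = geom_simplex_adm_weight[OF assms(3,4)]
  show ?thesis using phi_inject[OF w(1) w'(1) w(2) w'(2) inj_v assms(5)] .
qed

text \<open>An affine dependence among the vertices splits into two distinct points of the simplex with
  the same image.\<close>

lemma affine_independent_root_verts:
  assumes adm: "admissible n \<sigma>" shows "\<not> affine_dependent (root_vert v ` \<sigma>)"
proof
  assume dep: "affine_dependent (root_vert v ` \<sigma>)"
  have sa: "\<sigma> \<subseteq> arcs n" and fs: "finite \<sigma>" using adm unfolding admissible_def by auto
  have inj: "inj_on (root_vert v) \<sigma>" using inj_on_root_vert[OF inj_v] sa inj_on_subset by blast
  obtain U where U: "sum U (root_vert v ` \<sigma>) = 0" "\<exists>w\<in>root_vert v ` \<sigma>. U w \<noteq> 0"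
    "(\<Sum>w\<in>root_vert v ` \<sigma>. U w *\<^sub>R w) = 0"
    using dep affine_dependent_explicit_finite[of "root_vert v ` \<sigma>"] fs by blast
  define \<mu> where "\<mu> x = U (root_vert v x)" for x
  have sum0: "sum \<mu> \<sigma> = 0" using U(1) sum.reindex[OF inj, of U] by (simp add: \<mu>_def)
  have vec0: "(\<Sum>x\<in>\<sigma>. \<mu> x *\<^sub>R root_vert v x) = 0"
    using U(3) sum.reindex[OF inj, of "\<lambda>w. U w *\<^sub>R w"] by (simp add: \<mu>_def)
  obtain x0 where x0: "x0 \<in> \<sigma>" "\<mu> x0 \<noteq> 0" using U(2) by (auto simp: \<mu>_def)
  define P where "P = (\<Sum>x\<in>\<sigma>. max (\<mu> x) 0)"
  have "P - (\<Sum>x\<in>\<sigma>. max (- \<mu> x) 0) = sum \<mu> \<sigma>"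
    unfolding P_def sum_subtractf[symmetric] by (rule sum.cong) (auto simp: max_def)
  then have P_neg: "P = (\<Sum>x\<in>\<sigma>. max (- \<mu> x) 0)" using sum0 by simp
  have "\<exists>x\<in>\<sigma>. 0 < \<mu> x"
  proof (rule ccontr)
    assume "\<not> ?thesis"
    then have "\<forall>x\<in>\<sigma>. 0 \<le> - \<mu> x" by auto
    then have "\<forall>x\<in>\<sigma>. - \<mu> x = 0"
      using sum_nonneg_eq_0_iff[OF fs, of "\<lambda>x. - \<mu> x"] sum0 by (simp add: sum_negf)
    then show False using x0 by auto
  qed
  then obtain x1 where x1: "x1 \<in> \<sigma>" "0 < \<mu> x1" by blast
  have "max (\<mu> x1) 0 \<le> P" unfolding P_def by (rule member_le_sum[OF x1(1)]) (simp_all add: fs)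
  then have P: "0 < P" using x1 by simp
  define t1 where "t1 x = (if x \<in> \<sigma> then max (\<mu> x) 0 / P else 0)" for x
  define t2 where "t2 x = (if x \<in> \<sigma> then max (- \<mu> x) 0 / P else 0)" for x
  have "sum t1 \<sigma> = (\<Sum>x\<in>\<sigma>. max (\<mu> x) 0) / P" "sum t2 \<sigma> = (\<Sum>x\<in>\<sigma>. max (- \<mu> x) 0) / P"
    by (simp_all add: t1_def t2_def sum_divide_distrib)
  then have "sum t1 \<sigma> = 1" "sum t2 \<sigma> = 1" using P P_neg by (simp_all add: P_def)
  then have "t1 \<in> geom_simplex \<sigma>" "t2 \<in> geom_simplex \<sigma>"
    using P unfolding geom_simplex_def by (auto simp: t1_def t2_def)
  moreover have "phi n v t1 = phi n v t2"
  proof -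
    have "phi n v t1 - phi n v t2 = (\<Sum>x\<in>\<sigma>. (t1 x - t2 x) *\<^sub>R root_vert v x)"
      using phi_eq_sum_over[OF sa, where t=t1 and v=v] phi_eq_sum_over[OF sa, where t=t2 and v=v]
      by (simp add: t1_def t2_def sum_subtractf scaleR_diff_left)
    also have "\<dots> = (\<Sum>x\<in>\<sigma>. (1 / P) *\<^sub>R (\<mu> x *\<^sub>R root_vert v x))"
      by (rule sum.cong) (auto simp: t1_def t2_def max_def diff_divide_distrib)
    also have "\<dots> = 0" unfolding scaleR_sum_right[symmetric] vec0 by simp
    finally show ?thesis by simp
  qed
  ultimately have "t1 = t2" using geom_simplex_phi_inject adm by blast
  then have "t1 x1 = t2 x1" by simp
  then show False using x1 P by (simp add: t1_def t2_def)
qed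

lemma root_vert_in_sphere: "x \<in> arcs n \<Longrightarrow> root_vert v x \<in> H0 \<and> l1_norm (root_vert v x) = 2"
  using phi_in_H0 l1_norm_phi[OF admissible_singleton vertex_pt_in_geom_simplex] phi_vertex_pt
  by metis

lemma zero_in_Root: "0 \<in> Root n v"
proof -
  have arcs: "(0, 1) \<in> arcs n" "(1, 0) \<in> arcs n" using n_ge_3 by (auto simp: arcs_def)
  have "root_vert v (0, 1) \<in> Root n v" "root_vert v (1, 0) \<in> Root n v"
    unfolding Root_eq using arcs by (auto intro!: hull_inc)
  then have "(1/2) *\<^sub>R root_vert v (0, 1) + (1/2) *\<^sub>R root_vert v (1, 0) \<in> Root n v"
    by (intro convexD[OF convex_Root]) simp_all
  then show ?thesis by (simp add: root_vert_def scaleR_right_diff_distrib)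
qed

text \<open>For \<open>\<supseteq>\<close>, scale a point onto the sphere, where it is an image point of \<open>phi\<close> and
  hence lies in a simplex spanned by roots.\<close>

lemma Root_eq_l1_ball: "Root n v = {x. x \<in> H0 \<and> l1_norm x \<le> 2}"
proof
  have "root_vert v ` arcs n \<subseteq> {x. x \<in> H0 \<and> l1_norm x \<le> 2}"
    using root_vert_in_sphere by auto
  moreover have "convex {x. x \<in> H0 \<and> l1_norm x \<le> 2}"
    using convex_Int[OF subspace_imp_convex[OF subspace_H0] convex_l1_ball[of 2]]
    by (simp add: Int_def)
  ultimately show "Root n v \<subseteq> {x. x \<in> H0 \<and> l1_norm x \<le> 2}"
    unfolding Root_eq by (rule hull_minimal)
next
  show "{x. x \<in> H0 \<and> l1_norm x \<le> 2} \<subseteq> Root n v"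
  proof
    fix x :: "real^'n" assume "x \<in> {x. x \<in> H0 \<and> l1_norm x \<le> 2}"
    then have x: "x \<in> H0" "l1_norm x \<le> 2" by auto
    show "x \<in> Root n v"
    proof (cases "x = 0")
      case True then show ?thesis using zero_in_Root by simp
    next
      case False
      have "l1_norm x \<noteq> 0"
      proof
        assume "l1_norm x = 0"
        then have "\<forall>i. x $ i = 0" using sum_nonneg_eq_0_iff[of UNIV "\<lambda>i. \<bar>x $ i\<bar>"]
          by (simp add: l1_norm_def)
        then show False using False by (simp add: vec_eq_iff)
      qed
      then have pos: "0 < l1_norm x" using l1_norm_nonneg[of x] by linarith
      define y where "y = (2 / l1_norm x) *\<^sub>R x"
      have "y \<in> H0" unfolding y_def by (rule subspace_scale[OF subspace_H0 x(1)])
      moreover have "l1_norm y = 2" using pos by (simp add: y_def l1_norm_scaleR)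
      ultimately obtain \<sigma> t where \<sigma>: "admissible n \<sigma>" "t \<in> geom_simplex \<sigma>" "phi n v t = y"
        by (rule phi_onto_l1_sphere)
      have "convex hull (root_vert v ` \<sigma>) \<subseteq> Root n v"
        unfolding Root_eq using \<sigma>(1) by (intro hull_mono image_mono) (simp add: admissible_def)
      then have y_Root: "y \<in> Root n v" using phi_geom_simplex[OF \<sigma>(1)] \<sigma> by blast
      have "(l1_norm x / 2) *\<^sub>R y + (1 - l1_norm x / 2) *\<^sub>R 0 \<in> Root n v"
        by (rule convexD[OF convex_Root y_Root zero_in_Root]) (use pos x(2) in auto)
      then show ?thesis using pos by (simp add: y_def)
    qed
  qed
qed

lemma interior_Root: "(top_of_set H0) interior_of (Root n v) = {x. x \<in> H0 \<and> l1_norm x < 2}"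
proof
  have "openin (top_of_set H0) (H0 \<inter> {x. l1_norm x < 2})"
    using open_Collect_less[OF continuous_on_l1_norm continuous_on_const]
    by (auto simp: openin_open)
  then show "{x. x \<in> H0 \<and> l1_norm x < 2} \<subseteq> (top_of_set H0) interior_of (Root n v)"
    by (intro interior_of_maximal) (auto simp: Root_eq_l1_ball Int_def)
next
  show "(top_of_set H0) interior_of (Root n v) \<subseteq> {x. x \<in> H0 \<and> l1_norm x < 2}"
  proof
    fix x assume "x \<in> (top_of_set H0) interior_of (Root n v)"
    then obtain U where U: "open U" "x \<in> U" "H0 \<inter> U \<subseteq> Root n v" "x \<in> H0"
      unfolding interior_of_def openin_open by blast
    have x: "x \<in> H0" "l1_norm x \<le> 2" using U Root_eq_l1_ball by auto
    obtain e where e: "0 < e" "ball x e \<subseteq> U" using U open_contains_ball by blast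
    define d where "d = e / (2 * (norm x + 1))"
    have d: "0 < d" using e by (simp add: d_def add_nonneg_pos)
    have "dist x ((1 + d) *\<^sub>R x) = d * norm x" using d by (simp add: dist_norm algebra_simps)
    also have "\<dots> \<le> d * (norm x + 1)" using d by simp
    also have "\<dots> = e / 2" using add_nonneg_pos[OF norm_ge_zero, of 1 x]
      by (simp add: d_def field_simps)
    also have "\<dots> < e" using e by simp
    finally have "(1 + d) *\<^sub>R x \<in> U" using e by (auto simp: dist_commute)
    moreover have "(1 + d) *\<^sub>R x \<in> H0" by (rule subspace_scale[OF subspace_H0 x(1)])
    ultimately have "(1 + d) *\<^sub>R x \<in> Root n v" using U(3) by blast
    then have "(1 + d) * l1_norm x \<le> 2" using d by (simp add: Root_eq_l1_ball l1_norm_scaleR)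
    then show "x \<in> {x. x \<in> H0 \<and> l1_norm x < 2}"
      using x d l1_norm_nonneg[of x] by (auto simp: algebra_simps) (smt (verit) mult_pos_pos)
  qed
qed

lemma Root_boundary_eq: "Root_boundary n v = {x. x \<in> H0 \<and> l1_norm x = 2}"
proof -
  have "closed (Root n v)"
    unfolding Root_eq
    by (intro compact_imp_closed compact_convex_hull finite_imp_compact finite_imageI finite_arcs)
  then have "closedin (top_of_set H0) (H0 \<inter> Root n v)" by (rule closedin_closed_Int)
  moreover have "H0 \<inter> Root n v = Root n v" using Root_eq_l1_ball by blast
  ultimately have "(top_of_set H0) closure_of (Root n v) = Root n v"
    using closure_of_closedin by metis
  then have "Root_boundary n v = Root n v - (top_of_set H0) interior_of (Root n v)"
    unfolding Root_boundary_def frontier_of_def by simp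
  also have "\<dots> = Root n v - {x. x \<in> H0 \<and> l1_norm x < 2}" by (simp only: interior_Root)
  also have "\<dots> = {x. x \<in> H0 \<and> l1_norm x = 2}" unfolding Root_eq_l1_ball by auto
  finally show ?thesis .
qed

lemma Union_phi_simplices:
  "\<Union>((\<lambda>\<sigma>. phi n v ` geom_simplex \<sigma>) ` {\<sigma>. admissible n \<sigma>}) = Root_boundary n v"
proof
  show "\<Union>((\<lambda>\<sigma>. phi n v ` geom_simplex \<sigma>) ` {\<sigma>. admissible n \<sigma>}) \<subseteq> Root_boundary n v"
    unfolding Root_boundary_eq using phi_in_H0 l1_norm_phi by auto
  show "Root_boundary n v \<subseteq> \<Union>((\<lambda>\<sigma>. phi n v ` geom_simplex \<sigma>) ` {\<sigma>. admissible n \<sigma>})"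
  proof
    fix y assume "y \<in> Root_boundary n v"
    then have "y \<in> H0" "l1_norm y = 2" unfolding Root_boundary_eq by auto
    then obtain \<sigma> t where "admissible n \<sigma>" "t \<in> geom_simplex \<sigma>" "phi n v t = y"
      by (rule phi_onto_l1_sphere)
    then show "y \<in> \<Union>((\<lambda>\<sigma>. phi n v ` geom_simplex \<sigma>) ` {\<sigma>. admissible n \<sigma>})" by blast
  qed
qed

text \<open>Each root \<open>e\<^sub>i - e\<^sub>j\<close> is cut off from all others by the halfspace \<open>x\<^sub>i - x\<^sub>j \<le> 1\<close>.\<close>

lemma extreme_points_Root: "{p. p extreme_point_of Root n v} = root_vert v ` arcs n"
proof
  show "{p. p extreme_point_of Root n v} \<subseteq> root_vert v ` arcs n"
    unfolding Root_eq using extreme_point_of_convex_hull by blast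
  show "root_vert v ` arcs n \<subseteq> {p. p extreme_point_of Root n v}"
  proof
    fix g assume "g \<in> root_vert v ` arcs n"
    then obtain i j where ij: "(i, j) \<in> arcs n" and g: "g = root_vert v (i, j)" by auto
    have ijn: "i < n" "j < n" "i \<noteq> j" using arcsD[OF ij] by auto
    have "root_vert v ` arcs n - {g} \<subseteq> {y. y $ v i - y $ v j \<le> 1}"
    proof
      fix h assume "h \<in> root_vert v ` arcs n - {g}"
      then obtain k l where kl: "(k, l) \<in> arcs n" "h = root_vert v (k, l)" "(k, l) \<noteq> (i, j)"
        using g by auto
      then show "h \<in> {y. y $ v i - y $ v j \<le> 1}"
        using root_vert_component[OF inj_v kl(1)] ijn arcsD[OF kl(1)] by auto
    qed
    then have "convex hull (root_vert v ` arcs n - {g}) \<subseteq> {y. y $ v i - y $ v j \<le> 1}"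
      by (rule hull_minimal) (rule convex_difference_le)
    moreover have "g $ v i - g $ v j = 2"
      using root_vert_component[OF inj_v ij] ijn g by simp
    ultimately have "g \<notin> convex hull (root_vert v ` arcs n - {g})" by force
    then have "g extreme_point_of convex hull (insert g (root_vert v ` arcs n - {g}))"
      by (intro extreme_point_of_convex_hull_insert) (simp_all add: finite_arcs)
    then show "g \<in> {p. p extreme_point_of Root n v}"
      using \<open>g \<in> root_vert v ` arcs n\<close> by (simp add: Root_eq insert_absorb)
  qed
qed

lemma bij_betw_vertices:
  "bij_betw (\<lambda>x. phi n v (vertex_pt x)) (arcs n) {p. p extreme_point_of Root n v}"
proof -
  have "bij_betw (root_vert v) (arcs n) (root_vert v ` arcs n)"
    using inj_on_root_vert[OF inj_v] by (simp add: bij_betw_def)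
  then show ?thesis
    unfolding extreme_points_Root
    by (rule bij_betw_cong[THEN iffD1, rotated]) (simp add: phi_vertex_pt)
qed

lemma Int_phi_simplices:
  assumes adm: "admissible n \<sigma>" "admissible n \<sigma>'"
  shows "phi n v ` geom_simplex \<sigma> \<inter> phi n v ` geom_simplex \<sigma>'
    = convex hull (root_vert v ` (\<sigma> \<inter> \<sigma>'))"
proof
  show "phi n v ` geom_simplex \<sigma> \<inter> phi n v ` geom_simplex \<sigma>' \<subseteq> convex hull (root_vert v ` (\<sigma> \<inter> \<sigma>'))"
  proof
    fix p assume "p \<in> phi n v ` geom_simplex \<sigma> \<inter> phi n v ` geom_simplex \<sigma>'"
    then obtain t t' where t: "t \<in> geom_simplex \<sigma>" "p = phi n v t"
      and t': "t' \<in> geom_simplex \<sigma>'" "p = phi n v t'" by blast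
    have "t = t'" using geom_simplex_phi_inject[OF adm(1) t(1) adm(2) t'(1)] t t' by simp
    then have out: "\<forall>x. x \<notin> \<sigma> \<inter> \<sigma>' \<longrightarrow> t x = 0" using t(1) t'(1) unfolding geom_simplex_def by blast
    have "sum t (\<sigma> \<inter> \<sigma>') = sum t \<sigma>"
      using adm(1) out by (intro sum.mono_neutral_left) (auto simp: admissible_def)
    then have sum1: "sum t (\<sigma> \<inter> \<sigma>') = 1" using t(1) by (simp add: geom_simplex_def)
    then have "\<sigma> \<inter> \<sigma>' \<noteq> {}" by auto
    then have "admissible n (\<sigma> \<inter> \<sigma>')" using admissible_subset[OF adm(1)] by blast
    moreover have "t \<in> geom_simplex (\<sigma> \<inter> \<sigma>')"
      using t(1) out sum1 unfolding geom_simplex_def by blast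
    ultimately show "p \<in> convex hull (root_vert v ` (\<sigma> \<inter> \<sigma>'))" using phi_geom_simplex t(2) by blast
  qed
  show "convex hull (root_vert v ` (\<sigma> \<inter> \<sigma>')) \<subseteq> phi n v ` geom_simplex \<sigma> \<inter> phi n v ` geom_simplex \<sigma>'"
    unfolding phi_geom_simplex[OF adm(1)] phi_geom_simplex[OF adm(2)]
    by (simp add: hull_mono image_mono)
qed

lemma triangulation_phi_simplices:
  "triangulation ((\<lambda>\<sigma>. phi n v ` geom_simplex \<sigma>) ` {\<sigma>. admissible n \<sigma>})"
  unfolding triangulation_def
proof (intro conjI ballI allI impI)
  show "finite ((\<lambda>\<sigma>. phi n v ` geom_simplex \<sigma>) ` {\<sigma>. admissible n \<sigma>})"
    using finite_admissible by simp
next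
  fix T assume "T \<in> (\<lambda>\<sigma>. phi n v ` geom_simplex \<sigma>) ` {\<sigma>. admissible n \<sigma>}"
  then obtain \<sigma> where \<sigma>: "admissible n \<sigma>" "T = convex hull (root_vert v ` \<sigma>)"
    using phi_geom_simplex by blast
  then have "(int (card (root_vert v ` \<sigma>)) - 1) simplex T"
    unfolding simplex_def using affine_independent_root_verts[OF \<sigma>(1)] by auto
  then show "\<exists>k. k simplex T" ..
next
  fix T T' assume "T \<in> (\<lambda>\<sigma>. phi n v ` geom_simplex \<sigma>) ` {\<sigma>. admissible n \<sigma>}
    \<and> T' \<in> (\<lambda>\<sigma>. phi n v ` geom_simplex \<sigma>) ` {\<sigma>. admissible n \<sigma>}"
  then obtain \<sigma> \<sigma>' where \<sigma>: "admissible n \<sigma>" "admissible n \<sigma>'"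
    and T: "T = phi n v ` geom_simplex \<sigma>" "T' = phi n v ` geom_simplex \<sigma>'" by blast
  have "convex hull (root_vert v ` (\<sigma> \<inter> \<sigma>')) face_of convex hull (root_vert v ` \<sigma>)"
    unfolding face_of_convex_hull_affine_independent[OF affine_independent_root_verts[OF \<sigma>(1)]]
    by (rule exI[of _ "root_vert v ` (\<sigma> \<inter> \<sigma>')"]) blast
  moreover have "T \<inter> T' = convex hull (root_vert v ` (\<sigma> \<inter> \<sigma>'))"
    using T Int_phi_simplices[OF \<sigma>] by simp
  ultimately show "(T \<inter> T') face_of T" using T phi_geom_simplex[OF \<sigma>(1)] by simp
qed

lemma proper_face_in_boundary:
  assumes F: "F face_of Root n v" "F \<noteq> Root n v" and p: "p \<in> F"
  shows "p \<in> H0" "l1_norm p = 2"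
proof -
  have pR: "p \<in> Root n v" using face_of_imp_subset[OF F(1)] p by blast
  then show "p \<in> H0" using Root_eq_l1_ball by simp
  have "p \<notin> rel_interior (Root n v)"
    using face_of_subset_rel_frontier[OF F] p unfolding rel_frontier_def by blast
  moreover have "affine hull (Root n v) \<subseteq> H0"
    using Root_eq_l1_ball by (intro hull_minimal subspace_imp_affine subspace_H0) auto
  then have "p \<in> rel_interior (Root n v)" if "l1_norm p < 2"
    unfolding rel_interior using pR that Root_eq_l1_ball
      open_Collect_less[OF continuous_on_l1_norm continuous_on_const]
    by (intro CollectI conjI exI[of _ "{y. l1_norm y < 2}"]) auto
  ultimately show "l1_norm p = 2" using pR Root_eq_l1_ball by fastforce
qed

lemma phi_in_rel_interior:
  assumes t: "adm_weight n t" and total: "(\<Sum>x\<in>arcs n. t x) = 1"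
  shows "phi n v t \<in> rel_interior (convex hull (root_vert v ` arc_support n t))"
proof -
  let ?\<sigma> = "arc_support n t"
  have adm: "admissible n ?\<sigma>" using adm_weight_geom_simplex(1)[OF t total] .
  have inj: "inj_on (root_vert v) ?\<sigma>"
    using inj_on_root_vert[OF inj_v] arc_support_subset inj_on_subset by blast
  have sum1: "sum t ?\<sigma> = 1" using adm_weight_geom_simplex(2)[OF t total]
    by (simp add: geom_simplex_def)
  have phi_t: "phi n v t = (\<Sum>x\<in>?\<sigma>. t x *\<^sub>R root_vert v x)"
    using phi_eq_sum_over[OF arc_support_subset, where t=t and v=v] adm_weight_zero[OF t] by blast
  obtain u where u: "\<And>x. x \<in> ?\<sigma> \<Longrightarrow> u (root_vert v x) = t x"
    using ex_weight_on_image[OF inj, where t=t] by blast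
  have "\<forall>q\<in>root_vert v ` ?\<sigma>. 0 < u q" using u by (auto simp: arc_support_def)
  moreover have "sum u (root_vert v ` ?\<sigma>) = 1" using sum.reindex[OF inj, of u] u sum1 by simp
  moreover have "(\<Sum>q\<in>root_vert v ` ?\<sigma>. u q *\<^sub>R q) = phi n v t"
    using sum.reindex[OF inj, of "\<lambda>q. u q *\<^sub>R q"] u phi_t by simp
  ultimately show ?thesis
    unfolding rel_interior_convex_hull_explicit[OF affine_independent_root_verts[OF adm]] by blast
qed

text \<open>Every point of a proper face lies in the relative interior of the simplex of its support,
  so that whole simplex lies in the face.\<close>

lemma proper_face_Union_phi_simplices:
  assumes F: "F face_of Root n v" "F \<noteq> Root n v"
  shows "\<exists>S \<subseteq> {\<sigma>. admissible n \<sigma>}. (\<Union>\<sigma>\<in>S. phi n v ` geom_simplex \<sigma>) = F"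
proof -
  define S where "S = {\<sigma>. admissible n \<sigma> \<and> phi n v ` geom_simplex \<sigma> \<subseteq> F}"
  have "F \<subseteq> (\<Union>\<sigma>\<in>S. phi n v ` geom_simplex \<sigma>)"
  proof
    fix p assume p: "p \<in> F"
    obtain \<sigma> t where st: "admissible n \<sigma>" "t \<in> geom_simplex \<sigma>" "phi n v t = p"
      using phi_onto_l1_sphere proper_face_in_boundary[OF F p] by metis
    have t: "adm_weight n t" and total: "(\<Sum>x\<in>arcs n. t x) = 1"
      using geom_simplex_adm_weight[OF st(1,2)] by auto
    let ?\<tau> = "arc_support n t"
    have adm: "admissible n ?\<tau>" and t\<tau>: "t \<in> geom_simplex ?\<tau>"
      using adm_weight_geom_simplex[OF t total] by auto
    have "convex hull (root_vert v ` ?\<tau>) \<subseteq> Root n v"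
      unfolding Root_eq by (intro hull_mono image_mono arc_support_subset)
    then have "convex hull (root_vert v ` ?\<tau>) \<subseteq> F"
      using subset_of_face_of[OF F(1)] phi_in_rel_interior[OF t total] st(3) p by blast
    then have "?\<tau> \<in> S" using adm phi_geom_simplex[OF adm] by (simp add: S_def)
    moreover have "p \<in> phi n v ` geom_simplex ?\<tau>" using t\<tau> st(3) by blast
    ultimately show "p \<in> (\<Union>\<sigma>\<in>S. phi n v ` geom_simplex \<sigma>)" by blast
  qed
  then have "(\<Union>\<sigma>\<in>S. phi n v ` geom_simplex \<sigma>) = F" by (auto simp: S_def)
  moreover have "S \<subseteq> {\<sigma>. admissible n \<sigma>}" by (auto simp: S_def)
  ultimately show ?thesis by blast
qed

lemma continuous_map_phi: "continuous_map (powertop_real UNIV) euclidean (phi n v)"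
  unfolding phi_def[abs_def]
  by (intro continuous_map_sum finite_arcs continuous_map_scaleR_const
      continuous_map_product_projection) auto

lemma compactin_geom_simplex:
  assumes adm: "admissible n \<sigma>" shows "compactin (powertop_real UNIV) (geom_simplex \<sigma>)"
proof -
  have fs: "finite \<sigma>" using adm by (simp add: admissible_def)
  define B where "B x = (if x \<in> \<sigma> then {0..1::real} else {0})" for x
  have "compactin (powertop_real UNIV) (PiE UNIV B)"
    unfolding compactin_PiE by (simp add: B_def)
  moreover have "continuous_map (powertop_real UNIV) euclideanreal (\<lambda>t. sum t \<sigma>)"
    by (intro continuous_map_sum[OF fs] continuous_map_product_projection) auto
  then have "closedin (powertop_real UNIV) {t \<in> topspace (powertop_real UNIV). sum t \<sigma> \<in> {1}}"
    by (rule closedin_continuous_map_preimage) simp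
  moreover have "geom_simplex \<sigma> = {t \<in> topspace (powertop_real UNIV). sum t \<sigma> \<in> {1}} \<inter> PiE UNIV B"
  proof (intro set_eqI iffI)
    fix t assume t: "t \<in> geom_simplex \<sigma>"
    then have "t x \<le> sum t \<sigma>" if "x \<in> \<sigma>" for x
      using member_le_sum[OF that _ fs, of t] unfolding geom_simplex_def by blast
    then show "t \<in> {t \<in> topspace (powertop_real UNIV). sum t \<sigma> \<in> {1}} \<inter> PiE UNIV B"
      using t unfolding geom_simplex_def by (auto simp: B_def PiE_UNIV_domain)
  next
    fix t assume "t \<in> {t \<in> topspace (powertop_real UNIV). sum t \<sigma> \<in> {1}} \<inter> PiE UNIV B"
    then have B: "t x \<in> B x" and "sum t \<sigma> = 1" for x by (auto simp: PiE_UNIV_domain)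
    moreover have "0 \<le> t x" "x \<notin> \<sigma> \<longrightarrow> t x = 0" for x
      using B[of x] by (cases "x \<in> \<sigma>"; simp add: B_def)+
    ultimately show "t \<in> geom_simplex \<sigma>" unfolding geom_simplex_def by blast
  qed
  ultimately show ?thesis by (simp add: closed_Int_compactin)
qed

text \<open>A continuous bijection from the compact space \<open>|K_n|\<close> onto a Hausdorff space.\<close>

lemma homeomorphic_map_phi:
  "homeomorphic_map (realization_top n) (top_of_set (Root_boundary n v)) (phi n v)"
proof (rule continuous_imp_homeomorphic_map)
  have topspace: "topspace (realization_top n) = realization n" by (simp add: realization_top_def)
  have image: "phi n v ` realization n = Root_boundary n v"
    unfolding realization_def using Union_phi_simplices by (simp add: image_UN)
  show "continuous_map (realization_top n) (top_of_set (Root_boundary n v)) (phi n v)"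
    unfolding continuous_map_in_subtopology realization_top_def
    using continuous_map_from_subtopology[OF continuous_map_phi] image by auto
  show "compact_space (realization_top n)"
    unfolding realization_top_def realization_def
    by (intro compact_space_subtopology compactin_Union)
      (auto simp: finite_admissible compactin_geom_simplex)
  show "Hausdorff_space (top_of_set (Root_boundary n v))" by (rule Hausdorff_space_subtopology) simp
  show "phi n v ` topspace (realization_top n) = topspace (top_of_set (Root_boundary n v))"
    using topspace image by simp
  show "inj_on (phi n v) (topspace (realization_top n))"
    unfolding topspace realization_def using geom_simplex_phi_inject by (fastforce intro: inj_onI)
qed

end

theorem mainTheorem5:
  fixes v :: "nat \<Rightarrow> 'n::finite" and n :: nat
  assumes "n = CARD('n)" and "n \<ge> 3" and "bij_betw v {..<n} UNIV"
  shows "homeomorphic_map (realization_top n) (top_of_set (Root_boundary n v)) (phi n v)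
    \<and> {p. p extreme_point_of Root n v} = {ee v i - ee v j | i j. i < n \<and> j < n \<and> i \<noteq> j}
    \<and> bij_betw (\<lambda>x. phi n v (vertex_pt x)) (arcs n) {p. p extreme_point_of Root n v}
    \<and> (\<forall>\<sigma>. admissible n \<sigma> \<longrightarrow>
          phi n v ` geom_simplex \<sigma> = convex hull (root_vert v ` \<sigma>)
        \<and> \<not> affine_dependent (root_vert v ` \<sigma>)
        \<and> root_vert v ` \<sigma> \<subseteq> {p. p extreme_point_of Root n v})
    \<and> triangulation ((\<lambda>\<sigma>. phi n v ` geom_simplex \<sigma>) ` {\<sigma>. admissible n \<sigma>})
    \<and> \<Union>((\<lambda>\<sigma>. phi n v ` geom_simplex \<sigma>) ` {\<sigma>. admissible n \<sigma>}) = Root_boundary n v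
    \<and> (\<forall>F. F face_of Root n v \<and> F \<noteq> Root n v \<longrightarrow>
          (\<exists>S \<subseteq> {\<sigma>. admissible n \<sigma>}. (\<Union>\<sigma>\<in>S. phi n v ` geom_simplex \<sigma>) = F))"
proof -
  interpret root_polytope v n using assms by unfold_locales
  have "root_vert v ` \<sigma> \<subseteq> {p. p extreme_point_of Root n v}" if "admissible n \<sigma>" for \<sigma>
    using that unfolding extreme_points_Root admissible_def by (intro image_mono) blast
  then have simplices: "\<forall>\<sigma>. admissible n \<sigma> \<longrightarrow>
      phi n v ` geom_simplex \<sigma> = convex hull (root_vert v ` \<sigma>)
      \<and> \<not> affine_dependent (root_vert v ` \<sigma>)
      \<and> root_vert v ` \<sigma> \<subseteq> {p. p extreme_point_of Root n v}"
    using phi_geom_simplex affine_independent_root_verts by blast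
  show ?thesis
    by (intro conjI simplices homeomorphic_map_phi extreme_points_Root[folded root_vertices_eq]
        bij_betw_vertices triangulation_phi_simplices Union_phi_simplices)
      (use proper_face_Union_phi_simplices in blast)
qed

end
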